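(* Let $k\ge2$ and let $G_1$ be a graph on $k$ vertices whose complement is the cycle $C_k$ (for $k=2$, $C_2$ is the complete graph on $2$ vertices). For $d\ge2$ let $H$ be the join of $d$ copies of $G_1$ (on disjoint vertex sets). Then for $i\ge1$, $$\beta_{i,i+1}(H)=\binom{dk}{i+1}\frac{i(dk-i-2)}{dk-1}+d\binom{(d-1)k}{i-k+1},$$ and $\beta_{i,i+2}(H)=d\binom{(d-1)k}{i-k+2}$ if $k\ge4$, while $\beta_{i,i+2}(H)=0$ if $k\in\{2,3\}$.
   Context: The join $G*H$ of graphs with disjoint vertex sets has all edges of $G$, of $H$, and all pairs $\{x,y\}$ with $x\in V(G)$, $y\in V(H)$. For a finite simple graph $G$ on vertex set $V$, $R=\mathbb{K}[x_v:v\in V]$ over a fixed field $\mathbb{K}$, $I(G)=\langle x_ux_v:\{u,v\}\in E(G)\rangle$, and $\beta_{i,d}(G)=\beta_{i,d}(R/I(G))$ is the graded Betti number. Binomial coefficients $\binom{a}{b}$ are $0$ if $b<0$ or $b>a$. *)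

theory Defs
  imports Complex_Main "HOL-Library.Function_Algebras" "HOL-Library.Product_Lexorder"
begin

text \<open>A finite simple graph is given by a finite vertex set V and a symmetric,
irreflexive edge relation E on V. Variables x_v (v in V) of the polynomial ring
R = K[x_v : v in V]; a monomial is encoded by its exponent vector a :: 'v => nat
(supported in V).\<close>

definition in_edge_ideal :: "('v \<Rightarrow> 'v \<Rightarrow> bool) \<Rightarrow> ('v \<Rightarrow> nat) \<Rightarrow> bool" where
  "in_edge_ideal E a \<longleftrightarrow> (\<exists>u v. E u v \<and> 0 < a u \<and> 0 < a v)"

text \<open>Tor_i^R(R/I(G), K) is computed with the Koszul resolution of K = R/(x_v),
i.e. as homology of the Koszul complex K(x; R/I(G)). Its multidegree-a part in
homological degree i has K-basis the elements e_F (x) x^(a - 1_F), with F a subset of V,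
|F| = i, F contained in supp a, and x^(a - 1_F) a standard monomial (not in I(G)).\<close>

definition kbasis :: "'v set \<Rightarrow> ('v \<Rightarrow> 'v \<Rightarrow> bool) \<Rightarrow> ('v \<Rightarrow> nat) \<Rightarrow> nat \<Rightarrow> 'v set set" where
  "kbasis V E a i = {F. F \<subseteq> V \<and> card F = i \<and> (\<forall>v\<in>F. 0 < a v) \<and>
       \<not> in_edge_ideal E (\<lambda>v. a v - (if v \<in> F then 1 else 0))}"

text \<open>Chains: K-linear combinations of the basis elements, as coefficient functions.\<close>
definition kchains :: "'v set \<Rightarrow> ('v \<Rightarrow> 'v \<Rightarrow> bool) \<Rightarrow> ('v \<Rightarrow> nat) \<Rightarrow> nat \<Rightarrow> ('v set \<Rightarrow> 'k::field) set" where
  "kchains V E a i = {c. \<forall>F. F \<notin> kbasis V E a i \<longrightarrow> c F = 0}"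

text \<open>Koszul differential: e_F |-> sum over j in F of (-1)^(#{u in F. u < j}) x_j e_(F - {j}),
with the image read in R/I(G) (the term vanishes if the resulting monomial is in I(G)).\<close>
definition kcoef :: "'v::linorder set \<Rightarrow> 'v set \<Rightarrow> 'k::field" where
  "kcoef F G = (if G \<subseteq> F \<and> card (F - G) = 1
                then (-1) ^ card {u\<in>G. u < the_elem (F - G)} else 0)"

definition kbd :: "'v::linorder set \<Rightarrow> ('v \<Rightarrow> 'v \<Rightarrow> bool) \<Rightarrow> ('v \<Rightarrow> nat) \<Rightarrow> nat
    \<Rightarrow> ('v set \<Rightarrow> 'k::field) \<Rightarrow> ('v set \<Rightarrow> 'k)" where
  "kbd V E a i c = (\<lambda>G. if G \<in> kbasis V E a (i - 1)
       then (\<Sum>F\<in>kbasis V E a i. c F * kcoef F G) else 0)"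

definition kscale :: "'k::field \<Rightarrow> ('b \<Rightarrow> 'k) \<Rightarrow> ('b \<Rightarrow> 'k)" where
  "kscale r c = (\<lambda>x. r * c x)"

definition koszul_hdim :: "'k::field itself \<Rightarrow> 'v::linorder set \<Rightarrow> ('v \<Rightarrow> 'v \<Rightarrow> bool)
    \<Rightarrow> ('v \<Rightarrow> nat) \<Rightarrow> nat \<Rightarrow> nat" where
  "koszul_hdim K V E a i =
     vector_space.dim (kscale :: 'k \<Rightarrow> _)
        {c \<in> kchains V E a i. i = 0 \<or> kbd V E a i c = (\<lambda>_. 0)}
   - vector_space.dim (kscale :: 'k \<Rightarrow> _) (kbd V E a (i + 1) ` kchains V E a (i + 1))"

definition betti :: "'k::field itself \<Rightarrow> 'v::linorder set \<Rightarrow> ('v \<Rightarrow> 'v \<Rightarrow> bool)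
    \<Rightarrow> nat \<Rightarrow> nat \<Rightarrow> nat" where
  "betti K V E i j =
     (\<Sum>a\<in>{a. (\<forall>v. v \<notin> V \<longrightarrow> a v = 0) \<and> sum a V = j}. koszul_hdim K V E a i)"

definition cycle_adj :: "nat \<Rightarrow> nat \<Rightarrow> nat \<Rightarrow> bool" where
  "cycle_adj k a b \<longleftrightarrow> a < k \<and> b < k \<and> a \<noteq> b \<and> (b = (a + 1) mod k \<or> a = (b + 1) mod k)"

definition cocycle_edge :: "nat \<Rightarrow> nat \<Rightarrow> nat \<Rightarrow> bool" where
  "cocycle_edge k a b \<longleftrightarrow> a < k \<and> b < k \<and> a \<noteq> b \<and> \<not> cycle_adj k a b"

definition join_copies_V :: "nat \<Rightarrow> 'a set \<Rightarrow> (nat \<times> 'a) set" where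
  "join_copies_V d V1 = {..<d} \<times> V1"

definition join_copies_E :: "nat \<Rightarrow> 'a set \<Rightarrow> ('a \<Rightarrow> 'a \<Rightarrow> bool) \<Rightarrow> (nat \<times> 'a) \<Rightarrow> (nat \<times> 'a) \<Rightarrow> bool" where
  "join_copies_E d V1 E1 x y \<longleftrightarrow>
     x \<in> join_copies_V d V1 \<and> y \<in> join_copies_V d V1 \<and>
     (fst x \<noteq> fst y \<or> (fst x = fst y \<and> E1 (snd x) (snd y)))"

end

(*
  Betti numbers of R/I(G) are computed one multidegree at a time from the Koszul complex.
  In total degree at most i + 2 a multidegree that is not squarefree contributes nothing to
  Tor_i: either its support has at most i vertices, and there are no nonzero cycles, or it is
  x_W x_t with |W| = i + 1, where every cycle is a multiple of the boundary of the face W.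
  In a squarefree multidegree x_W the Koszul complex is the chain complex of the independence
  complex of G on W. For |W| = i + 1 its homology has dimension one less than the number of
  components of the complement of G on W. For |W| = i + 2 the cycles are counted by the
  independent pairs minus the independent triples (if no two of them share two vertices) and
  the boundaries by |W| minus the number of components.

  For the join H the complement is a disjoint union of d cycles C_k. On W its components are
  the full cycles and the runs of consecutive vertices, its independent pairs are the
  consecutive pairs, and independent triples occur only for k = 3, as full triangles. So W
  contributes i - (consecutive pairs) + (full copies) if |W| = i + 1, and (full copies) if
  |W| = i + 2 and k >= 4. Summing over W by double counting gives the binomial formulas.
*)
theory Submission
  imports Defs
begin

section \<open>Dimension counting in finitely spanned spaces\<close>

context vector_space
begin

lemma obtain_finite_basis:
  assumes "S \<subseteq> span U" "finite U"
  obtains B where "B \<subseteq> S" "independent B" "S \<subseteq> span B" "card B = dim S" "finite B"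
proof -
  obtain B where B: "B \<subseteq> S" "independent B" "S \<subseteq> span B" "card B = dim S"
    using basis_exists by blast
  have "finite B"
    using independent_span_bound[OF assms(2) B(2)] B(1) assms(1) by blast
  with B that show ?thesis by blast
qed

lemma dim_le_dim_if_subset_span:
  assumes "S \<subseteq> span T" "T \<subseteq> span U" "finite U"
  shows "dim S \<le> dim T"
proof -
  obtain B where B: "B \<subseteq> T" "T \<subseteq> span B" "card B = dim T" "finite B"
    using obtain_finite_basis[OF assms(2,3)] by metis
  have "S \<subseteq> span B"
    using assms(1) B(2) span_mono span_span by (metis subset_trans)
  then show ?thesis using dim_le_card B by metis
qed

lemma independent_span_Int_span_diff:
  assumes "independent B" "finite B" "A \<subseteq> B" "x \<in> span A" "x \<in> span (B - A)"
  shows "x = 0"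
proof -
  obtain u where u: "x = (\<Sum>v\<in>B - A. u v *s v)"
    using assms(2,5) span_finite[of "B - A"] by auto
  obtain w where w: "x = (\<Sum>v\<in>A. w v *s v)"
    using assms(2,3,4) span_finite[of A] finite_subset by blast
  define g where "g v = (if v \<in> A then - w v else u v)" for v
  have "(\<Sum>v\<in>B. g v *s v) = (\<Sum>v\<in>B - A. g v *s v) + (\<Sum>v\<in>A. g v *s v)"
    using assms(2,3) by (metis sum.subset_diff)
  also have "\<dots> = x - x"
    using u w by (simp add: g_def sum_negf)
  finally have "\<forall>v\<in>B. g v = 0"
    using assms(1,2) dependent_finite by auto
  then show "x = 0" using u by (auto simp: g_def intro!: sum.neutral)
qed

end

context vector_space_pair
begin

lemma dim_image_eq_if_inj_on_span:
  assumes f: "Vector_Spaces.linear s1 s2 f" and "S \<subseteq> vs1.span U" "finite U"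
    and inj: "inj_on f (vs1.span S)"
  shows "vs2.dim (f ` S) = vs1.dim S"
proof -
  obtain B where B: "B \<subseteq> S" "vs1.independent B" "S \<subseteq> vs1.span B" "card B = vs1.dim S"
    using vs1.obtain_finite_basis[OF assms(2,3)] by metis
  have span_B: "vs1.span S = vs1.span B"
    using B vs1.span_mono vs1.span_span by (metis subset_antisym)
  have "vs2.independent (f ` B)"
    using linear_independent_injective_image[OF f B(2)] inj span_B by simp
  moreover have "vs2.span (f ` B) = vs2.span (f ` S)"
    using linear_span_image[OF f] span_B by metis
  ultimately have "vs2.dim (f ` S) = card (f ` B)"
    by (metis vs2.dim_eq_card)
  also have "\<dots> = card B"
    using inj B(1) vs1.span_superset by (intro card_image inj_on_subset[OF inj]) blast
  finally show ?thesis using B by simp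
qed

lemma inj_on_span_diff_kernel_basis:
  assumes f: "Vector_Spaces.linear s1 s2 f" and B: "vs1.independent B" "finite B" "BK \<subseteq> B"
    and kernel: "\<And>x. x \<in> vs1.span B \<Longrightarrow> f x = 0 \<Longrightarrow> x \<in> vs1.span BK"
  shows "inj_on f (vs1.span (B - BK))"
proof (subst linear_inj_on_iff_eq_0[OF f], simp, intro ballI impI)
  fix x assume x: "x \<in> vs1.span (B - BK)" "f x = 0"
  then have "x \<in> vs1.span BK"
    using kernel vs1.span_mono[of "B - BK" B] by blast
  then show "x = 0"
    using vs1.independent_span_Int_span_diff[OF B] x(1) by blast
qed

lemma span_image_diff_kernel:
  assumes "\<And>x. x \<in> BK \<Longrightarrow> f x = 0"
  shows "vs2.span (f ` B) = vs2.span (f ` (B - BK))"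
proof
  have "f ` B \<subseteq> insert 0 (f ` (B - BK))" using assms by auto
  then have "vs2.span (f ` B) \<subseteq> vs2.span (insert 0 (f ` (B - BK)))"
    by (rule vs2.span_mono)
  then show "vs2.span (f ` B) \<subseteq> vs2.span (f ` (B - BK))"
    by simp
  show "vs2.span (f ` (B - BK)) \<subseteq> vs2.span (f ` B)"
    by (rule vs2.span_mono) auto
qed

lemma rank_nullity:
  assumes f: "Vector_Spaces.linear s1 s2 f" and L: "vs1.subspace L" "L \<subseteq> vs1.span U" "finite U"
  shows "vs1.dim {x \<in> L. f x = 0} + vs2.dim (f ` L) = vs1.dim L"
proof -
  define K where "K = {x \<in> L. f x = 0}"
  obtain BK where BK: "BK \<subseteq> K" "vs1.independent BK" "K \<subseteq> vs1.span BK" "card BK = vs1.dim K"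
    "finite BK"
    using vs1.obtain_finite_basis[of K U] L by (auto simp: K_def)
  obtain B where B: "BK \<subseteq> B" "B \<subseteq> L" "vs1.independent B" "L \<subseteq> vs1.span B"
    using vs1.maximal_independent_subset_extend[of BK L] BK by (auto simp: K_def)
  have fin_B: "finite B"
    using vs1.independent_span_bound[OF L(3) B(3)] B(2) L(2) by blast
  have span_B: "vs1.span B = L"
    using B L(1) vs1.span_minimal by (metis subset_antisym)
  have inj: "inj_on f (vs1.span (B - BK))"
    using inj_on_span_diff_kernel_basis[OF f B(3) fin_B B(1)] BK(3) span_B by (auto simp: K_def)
  have "f ` L = vs2.span (f ` B)"
    using linear_span_image[OF f, of B] span_B by simp
  then have "vs2.span (f ` L) = vs2.span (f ` B)"
    by (simp add: vs2.span_span)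
  also have "\<dots> = vs2.span (f ` (B - BK))"
    by (rule span_image_diff_kernel) (use BK(1) in \<open>auto simp: K_def\<close>)
  finally have "vs2.span (f ` L) = vs2.span (f ` (B - BK))" .
  moreover have "vs2.independent (f ` (B - BK))"
    using linear_independent_injective_image[OF f _ inj] vs1.independent_mono[OF B(3)] by blast
  ultimately have "vs2.dim (f ` L) = card (f ` (B - BK))"
    using vs2.dim_eq_card by metis
  also have "\<dots> = card (B - BK)"
    using inj vs1.span_superset by (intro card_image) (blast intro: inj_on_subset)
  finally have "vs2.dim (f ` L) = card (B - BK)" .
  moreover have "vs1.dim L = card BK + card (B - BK)"
    using vs1.basis_card_eq_dim[OF B(2,4,3)] card_mono[OF fin_B B(1)] card_Diff_subset[OF BK(5) B(1)]
    by simp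
  ultimately show ?thesis using BK(4) by (simp add: K_def)
qed

end

section \<open>Finitely supported functions\<close>

lemma vector_space_kscale: "vector_space (kscale :: 'k::field \<Rightarrow> ('b \<Rightarrow> 'k) \<Rightarrow> ('b \<Rightarrow> 'k))"
  by unfold_locales (auto simp: kscale_def fun_eq_iff algebra_simps)

global_interpretation kv: vector_space "kscale :: 'k::field \<Rightarrow> ('b \<Rightarrow> 'k) \<Rightarrow> ('b \<Rightarrow> 'k)"
  by (rule vector_space_kscale)

global_interpretation kvp: vector_space_pair "kscale :: 'k::field \<Rightarrow> ('b \<Rightarrow> 'k) \<Rightarrow> ('b \<Rightarrow> 'k)"
  "kscale :: 'k::field \<Rightarrow> ('c \<Rightarrow> 'k) \<Rightarrow> ('c \<Rightarrow> 'k)"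
  by unfold_locales

lemma kscale_apply [simp]: "kscale r c x = r * c x"
  by (simp add: kscale_def)

lemma sum_fun_apply: "(sum f A) x = sum (\<lambda>a. f a x) A"
  by (induction A rule: infinite_finite_induct) auto

definition supported_on :: "'b set \<Rightarrow> ('b \<Rightarrow> 'k::field) set" where
  "supported_on X = {c. \<forall>x. x \<notin> X \<longrightarrow> c x = 0}"

definition delta :: "'b \<Rightarrow> 'b \<Rightarrow> 'k::field" where
  "delta x = (\<lambda>y. if y = x then 1 else 0)"

lemma delta_apply [simp]: "delta x y = (if y = x then 1 else 0)"
  by (simp add: delta_def)

lemma inj_delta: "inj (delta :: 'b \<Rightarrow> 'b \<Rightarrow> 'k::field)"
  by (auto simp: inj_def fun_eq_iff dest: spec[where x = x for x])

lemma supported_onD: "c \<in> supported_on X \<Longrightarrow> x \<notin> X \<Longrightarrow> c x = 0"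
  by (simp add: supported_on_def)

lemma subspace_supported_on: "kv.subspace (supported_on X :: ('b \<Rightarrow> 'k::field) set)"
  by (auto simp: kv.subspace_def supported_on_def)

lemma delta_in_supported_on: "x \<in> X \<Longrightarrow> delta x \<in> supported_on X"
  by (auto simp: supported_on_def)

lemma span_delta:
  assumes "finite X"
  shows "kv.span (delta ` X) = (supported_on X :: ('b \<Rightarrow> 'k::field) set)"
proof
  show "kv.span (delta ` X) \<subseteq> (supported_on X :: ('b \<Rightarrow> 'k) set)"
    by (rule kv.span_minimal) (auto simp: subspace_supported_on delta_in_supported_on)
  show "(supported_on X :: ('b \<Rightarrow> 'k) set) \<subseteq> kv.span (delta ` X)"
  proof
    fix c :: "'b \<Rightarrow> 'k" assume c: "c \<in> supported_on X"
    have "c = (\<Sum>x\<in>X. kscale (c x) (delta x))"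
      using assms c by (auto simp: fun_eq_iff sum_fun_apply supported_on_def if_distrib
          cong: if_cong)
    also have "\<dots> \<in> kv.span (delta ` X)"
      by (intro kv.span_sum kv.span_scale kv.span_base) auto
    finally show "c \<in> kv.span (delta ` X)" .
  qed
qed

lemma independent_delta:
  assumes "finite X"
  shows "kv.independent (delta ` X :: ('b \<Rightarrow> 'k::field) set)"
proof (rule kv.independent_if_scalars_zero)
  show "finite (delta ` X :: ('b \<Rightarrow> 'k) set)" using assms by simp
  fix f :: "('b \<Rightarrow> 'k) \<Rightarrow> 'k" and v :: "'b \<Rightarrow> 'k"
  assume s: "(\<Sum>x\<in>delta ` X. kscale (f x) x) = 0" and v: "v \<in> delta ` X"
  then obtain y where y: "y \<in> X" "v = delta y" by auto
  have "(\<Sum>x\<in>X. kscale (f (delta x)) (delta x)) = (\<Sum>x\<in>delta ` X. kscale (f x) x)"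
    by (subst sum.reindex) (auto intro: inj_on_subset[OF inj_delta])
  then have "(\<Sum>x\<in>X. f (delta x) * (if y = x then 1 else 0)) = 0"
    using s by (simp add: sum_fun_apply fun_eq_iff)
  then show "f v = 0" using y assms by (simp add: if_distrib cong: if_cong)
qed

lemma dim_supported_on:
  assumes "finite X"
  shows "kv.dim (supported_on X :: ('b \<Rightarrow> 'k::field) set) = card X"
proof -
  have "kv.dim (supported_on X :: ('b \<Rightarrow> 'k) set) = card (delta ` X :: ('b \<Rightarrow> 'k) set)"
    using independent_delta[OF assms] span_delta[OF assms] kv.dim_span_eq_card_independent
    by metis
  also have "\<dots> = card X"
    by (rule card_image[OF inj_on_subset[OF inj_delta]]) auto
  finally show ?thesis .
qed

lemma rank_nullity_supported_on:
  fixes f :: "('b \<Rightarrow> 'k::field) \<Rightarrow> ('c \<Rightarrow> 'k)"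
  assumes "Vector_Spaces.linear kscale kscale f" "finite X"
  shows "kv.dim {c \<in> supported_on X. f c = 0} + kv.dim (f ` supported_on X) = card X"
  using kvp.rank_nullity[OF assms(1) subspace_supported_on, of X "delta ` X"] assms(2)
  by (simp add: span_delta dim_supported_on)

section \<open>The Koszul differential\<close>

lemma kcoef_insert:
  assumes "x \<notin> G"
  shows "kcoef (insert x G) G = (-1) ^ card {u\<in>G. u < x}"
proof -
  have "insert x G - G = {x}" using assms by auto
  then show ?thesis by (simp add: kcoef_def subset_insertI)
qed

lemma kcoef_neq_0_imp_insert:
  assumes "kcoef F G \<noteq> 0"
  obtains x where "x \<notin> G" "F = insert x G"
proof -
  have "G \<subseteq> F" "card (F - G) = 1" using assms by (auto simp: kcoef_def split: if_splits)
  then obtain x where "F - G = {x}" by (auto simp: card_1_singleton_iff)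
  then show ?thesis using that \<open>G \<subseteq> F\<close> by auto
qed

lemma kcoef_remove_square:
  assumes "x \<in> F"
  shows "kcoef F (F - {x}) * kcoef F (F - {x}) = (1 :: 'k::field)"
proof -
  have "kcoef F (F - {x}) = ((-1) ^ card {u\<in>F - {x}. u < x} :: 'k)"
    using kcoef_insert[of x "F - {x}"] assms by (simp add: insert_absorb)
  then show ?thesis by (simp add: power_mult_distrib[symmetric])
qed

lemma card_less_insert:
  assumes "finite G" "y \<notin> G"
  shows "card {u\<in>insert y G. u < x} = card {u\<in>G. u < x} + (if y < x then 1 else 0)"
proof (cases "y < x")
  case True
  then have "{u\<in>insert y G. u < x} = insert y {u\<in>G. u < x}" by auto
  then show ?thesis using assms True by simp
next
  case False
  then have "{u\<in>insert y G. u < x} = {u\<in>G. u < x}" by auto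
  then show ?thesis using False by simp
qed

lemma kcoef_remove_anticommute:
  fixes u w :: "'v::linorder"
  assumes "finite W" "u \<in> W" "w \<in> W" "u \<noteq> w"
  shows "kcoef W (W - {u}) * kcoef (W - {u}) (W - {u, w}) =
         - (kcoef W (W - {w}) * kcoef (W - {w}) (W - {u, w}) :: 'k::field)"
proof -
  define H where "H = W - {u, w}"
  have H: "u \<notin> H" "w \<notin> H" "finite H" using assms by (auto simp: H_def)
  have W: "insert u (insert w H) = W" "insert w (insert u H) = W"
    "W - {u} = insert w H" "W - {w} = insert u H"
    using assms by (auto simp: H_def)
  have n: "u \<notin> insert w H" "w \<notin> insert u H" using H assms(4) by auto
  have e1: "kcoef W (insert w H) = ((-1) ^ (card {v\<in>H. v < u} + (if w < u then 1 else 0)) :: 'k)"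
    using kcoef_insert[OF n(1)] card_less_insert[OF H(3,2)] W(1) by simp
  have e2: "kcoef W (insert u H) = ((-1) ^ (card {v\<in>H. v < w} + (if u < w then 1 else 0)) :: 'k)"
    using kcoef_insert[OF n(2)] card_less_insert[OF H(3,1)] W(2) by simp
  show ?thesis
    using assms(4) unfolding H_def[symmetric] W(3,4) e1 e2 kcoef_insert[OF H(1)] kcoef_insert[OF H(2)]
    by (cases "u < w") (auto simp: power_add not_less_iff_gr_or_eq)
qed

text \<open>The coefficients of a chain on the facets W - {u} of W, rescaled by the Koszul signs.
  In the multidegree of x_W the cycle condition then says that they agree at non-adjacent u, w.\<close>

definition top_coords :: "'v::linorder set \<Rightarrow> ('v set \<Rightarrow> 'k::field) \<Rightarrow> 'v \<Rightarrow> 'k" where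
  "top_coords W c u = (if u \<in> W then c (W - {u}) * kcoef W (W - {u}) else 0)"

lemma linear_top_coords:
  "Vector_Spaces.linear kscale kscale (top_coords W :: ('v::linorder set \<Rightarrow> 'k::field) \<Rightarrow> _)"
  unfolding Vector_Spaces.linear_iff
  by (auto simp: vector_space_kscale top_coords_def fun_eq_iff distrib_right mult.assoc)

lemma top_coords_inverse:
  fixes c :: "'v::linorder set \<Rightarrow> 'k::field"
  assumes "u \<in> W"
  shows "c (W - {u}) = top_coords W c u * kcoef W (W - {u})"
  using kcoef_remove_square[OF assms, where 'k='k] assms by (simp add: top_coords_def mult.assoc)

lemma sum_kcoef_remove_pair:
  assumes "finite B" "\<And>F. F \<in> B \<Longrightarrow> F \<subseteq> W" "W - {u} \<in> B" "W - {w} \<in> B"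
    "u \<in> W" "w \<in> W" "u \<noteq> w"
  shows "(\<Sum>F\<in>B. c F * kcoef F (W - {u, w})) =
    c (W - {u}) * kcoef (W - {u}) (W - {u, w}) + c (W - {w}) * kcoef (W - {w}) (W - {u, w})"
proof -
  have "c F * kcoef F (W - {u, w}) = 0" if "F \<in> B" "F \<noteq> W - {u}" "F \<noteq> W - {w}" for F
  proof (rule ccontr)
    assume "c F * kcoef F (W - {u, w}) \<noteq> 0"
    then obtain x where "x \<notin> W - {u, w}" "F = insert x (W - {u, w})"
      using kcoef_neq_0_imp_insert by (metis mult_zero_right)
    moreover have "F \<subseteq> W" using that assms(2) by auto
    ultimately show False using that assms(5-7) by (cases "x = u") auto
  qed
  moreover have "W - {u} \<noteq> W - {w}" using assms(5-7) by auto
  ultimately have "(\<Sum>F\<in>B. c F * kcoef F (W - {u, w})) = (\<Sum>F\<in>{W - {u}, W - {w}}. c F * kcoef F (W - {u, w}))"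
    using assms(1,3,4) by (intro sum.mono_neutral_right) auto
  then show ?thesis using \<open>W - {u} \<noteq> W - {w}\<close> by simp
qed

lemma sum_kcoef_remove_pair_eq_0_iff:
  fixes c :: "'v::linorder set \<Rightarrow> 'k::field"
  assumes "finite W" "finite B" "\<And>F. F \<in> B \<Longrightarrow> F \<subseteq> W" "W - {u} \<in> B" "W - {w} \<in> B"
    "u \<in> W" "w \<in> W" "u \<noteq> w"
  shows "(\<Sum>F\<in>B. c F * kcoef F (W - {u, w})) = 0 \<longleftrightarrow> top_coords W c u = top_coords W c w"
proof -
  let ?a = "kcoef (W - {u}) (W - {u, w}) :: 'k" and ?b = "kcoef (W - {w}) (W - {u, w}) :: 'k"
    and ?p = "kcoef W (W - {u}) :: 'k" and ?q = "kcoef W (W - {w}) :: 'k"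
  have sign: "?p * ?a = - (?q * ?b)"
    by (rule kcoef_remove_anticommute[OF assms(1,6,7,8)])
  have "W - {u, w} = W - {u} - {w}" "W - {u, w} = W - {w} - {u}" by auto
  then have squares: "?a * ?a = 1" "?b * ?b = 1" "?p * ?p = 1"
    using kcoef_remove_square[of w "W - {u}"] kcoef_remove_square[of u "W - {w}"]
      kcoef_remove_square[of u W] assms(6-8) by auto
  have "(c (W - {u}) * ?a + c (W - {w}) * ?b) * (?p * ?a) =
      c (W - {u}) * ?p * (?a * ?a) + c (W - {w}) * ?b * (?p * ?a)"
    by (simp add: algebra_simps)
  also have "\<dots> = c (W - {u}) * ?p - c (W - {w}) * ?q * (?b * ?b)"
    unfolding sign squares(1) by (simp add: algebra_simps)
  also have "\<dots> = top_coords W c u - top_coords W c w"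
    using squares(2) assms(6,7) by (simp add: top_coords_def)
  finally have eq: "(c (W - {u}) * ?a + c (W - {w}) * ?b) * (?p * ?a) =
      top_coords W c u - top_coords W c w" .
  have "(?p * ?a) * (?p * ?a) = (?p * ?p) * (?a * ?a)"
    by (simp only: mult_ac)
  then have "?p * ?a \<noteq> 0"
    using squares by auto
  then have "c (W - {u}) * ?a + c (W - {w}) * ?b = 0 \<longleftrightarrow>
      (c (W - {u}) * ?a + c (W - {w}) * ?b) * (?p * ?a) = 0"
    by simp
  also have "\<dots> \<longleftrightarrow> top_coords W c u = top_coords W c w"
    unfolding eq by simp
  finally show ?thesis
    using sum_kcoef_remove_pair[OF assms(2-8), of c] by simp
qed

lemma finite_kbasis: "finite V \<Longrightarrow> finite (kbasis V E a i)"
  by (rule finite_subset[of _ "Pow V"]) (auto simp: kbasis_def)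

lemma linear_kbd:
  "Vector_Spaces.linear kscale kscale (kbd V E a i :: ('v::linorder set \<Rightarrow> 'k::field) \<Rightarrow> _)"
  unfolding Vector_Spaces.linear_iff
  by (auto simp: vector_space_kscale kbd_def fun_eq_iff distrib_right sum.distrib
      sum_distrib_left mult.assoc)

lemma kbd_in_supported_on: "kbd V E a i c \<in> supported_on (kbasis V E a (i - 1))"
  by (simp add: kbd_def supported_on_def)

lemma kbd_delta:
  assumes "finite V" "F \<in> kbasis V E a n"
  shows "kbd V E a n (delta F) G = (if G \<in> kbasis V E a (n - 1) then kcoef F G else (0::'k::field))"
proof -
  have "(\<Sum>F'\<in>kbasis V E a n. delta F F' * kcoef F' G) = (\<Sum>F'\<in>{F}. delta F F' * kcoef F' G :: 'k)"
    by (rule sum.mono_neutral_right) (use assms finite_kbasis in auto)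
  then show ?thesis by (simp add: kbd_def)
qed

abbreviation kcycles :: "'v::linorder set \<Rightarrow> ('v \<Rightarrow> 'v \<Rightarrow> bool) \<Rightarrow> ('v \<Rightarrow> nat) \<Rightarrow> nat
    \<Rightarrow> ('v set \<Rightarrow> 'k::field) set" where
  "kcycles V E a i \<equiv> {c \<in> supported_on (kbasis V E a i). kbd V E a i c = 0}"

abbreviation kboundaries :: "'v::linorder set \<Rightarrow> ('v \<Rightarrow> 'v \<Rightarrow> bool) \<Rightarrow> ('v \<Rightarrow> nat) \<Rightarrow> nat
    \<Rightarrow> ('v set \<Rightarrow> 'k::field) set" where
  "kboundaries V E a i \<equiv> kbd V E a (i + 1) ` supported_on (kbasis V E a (i + 1))"

lemma koszul_hdim_eq:
  assumes "1 \<le> i"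
  shows "koszul_hdim TYPE('k::field) V E a i =
    kv.dim (kcycles V E a i :: ('v::linorder set \<Rightarrow> 'k) set) - kv.dim (kboundaries V E a i :: ('v set \<Rightarrow> 'k) set)"
  using assms by (simp add: koszul_hdim_def kchains_def supported_on_def zero_fun_def)

section \<open>Squarefree multidegrees\<close>

definition indep_set :: "('v \<Rightarrow> 'v \<Rightarrow> bool) \<Rightarrow> 'v set \<Rightarrow> bool" where
  "indep_set E S \<longleftrightarrow> (\<forall>u\<in>S. \<forall>v\<in>S. \<not> E u v)"

definition indep_subsets :: "('v \<Rightarrow> 'v \<Rightarrow> bool) \<Rightarrow> 'v set \<Rightarrow> nat \<Rightarrow> 'v set set" where
  "indep_subsets E W m = {S. S \<subseteq> W \<and> card S = m \<and> indep_set E S}"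

definition sqfree_deg :: "'v set \<Rightarrow> 'v \<Rightarrow> nat" where
  "sqfree_deg W v = (if v \<in> W then 1 else 0)"

text \<open>Its dimension is the number of connected components of the complement of E on W.\<close>

definition nonedge_const :: "('v \<Rightarrow> 'v \<Rightarrow> bool) \<Rightarrow> 'v set \<Rightarrow> ('v \<Rightarrow> 'k::field) set" where
  "nonedge_const E W = {g. (\<forall>x. x \<notin> W \<longrightarrow> g x = 0) \<and> (\<forall>u\<in>W. \<forall>w\<in>W. \<not> E u w \<longrightarrow> g u = g w)}"

lemma subspace_nonedge_const: "kv.subspace (nonedge_const E W :: ('v \<Rightarrow> 'k::field) set)"
  unfolding kv.subspace_def nonedge_const_def by (auto simp: zero_fun_def)

lemma nonedge_constD: "g \<in> nonedge_const E W \<Longrightarrow> x \<notin> W \<Longrightarrow> g x = 0"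
  by (simp add: nonedge_const_def)

lemma nonedge_const_subset_supported_on: "nonedge_const E W \<subseteq> supported_on W"
  by (auto simp: nonedge_const_def supported_on_def)

lemma in_edge_ideal_iff: "in_edge_ideal E a \<longleftrightarrow> \<not> indep_set E {v. 0 < a v}"
  by (auto simp: in_edge_ideal_def indep_set_def)

lemma sum_sqfree_deg: "finite V \<Longrightarrow> W \<subseteq> V \<Longrightarrow> sum (sqfree_deg W) V = card W"
  by (simp add: sqfree_deg_def sum.If_cases Int_absorb1)

locale simple_graph =
  fixes V :: "'v::linorder set" and E :: "'v \<Rightarrow> 'v \<Rightarrow> bool"
  assumes finite_V: "finite V"
    and irrefl: "\<not> E u u"
    and sym: "E u v \<Longrightarrow> E v u"
begin

lemma kbasis_sqfree_iff:
  assumes "W \<subseteq> V"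
  shows "F \<in> kbasis V E (sqfree_deg W) n \<longleftrightarrow> F \<subseteq> W \<and> card F = n \<and> indep_set E (W - F)"
proof -
  have supp: "{v. 0 < sqfree_deg W v - (if v \<in> F then 1 else 0)} = W - F" if "F \<subseteq> W"
    using that by (auto simp: sqfree_deg_def)
  show ?thesis
  proof
    assume F: "F \<in> kbasis V E (sqfree_deg W) n"
    then have "F \<subseteq> W" by (auto simp: kbasis_def sqfree_deg_def split: if_splits)
    then show "F \<subseteq> W \<and> card F = n \<and> indep_set E (W - F)"
      using F supp by (auto simp: kbasis_def in_edge_ideal_iff)
  next
    assume "F \<subseteq> W \<and> card F = n \<and> indep_set E (W - F)"
    then show "F \<in> kbasis V E (sqfree_deg W) n"
      using supp assms by (auto simp: kbasis_def in_edge_ideal_iff sqfree_deg_def)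
  qed
qed

lemma card_kbasis_sqfree:
  assumes "W \<subseteq> V" "n \<le> card W"
  shows "card (kbasis V E (sqfree_deg W) n) = card (indep_subsets E W (card W - n))"
proof -
  have fin: "finite W" using finite_subset[OF assms(1) finite_V] .
  have "bij_betw (\<lambda>F. W - F) (kbasis V E (sqfree_deg W) n) (indep_subsets E W (card W - n))"
  proof (rule bij_betw_byWitness[where f' = "\<lambda>S. W - S"])
    show "\<forall>F\<in>kbasis V E (sqfree_deg W) n. W - (W - F) = F"
      using kbasis_sqfree_iff[OF assms(1)] by auto
    show "\<forall>S\<in>indep_subsets E W (card W - n). W - (W - S) = S"
      by (auto simp: indep_subsets_def)
    show "(\<lambda>F. W - F) ` kbasis V E (sqfree_deg W) n \<subseteq> indep_subsets E W (card W - n)"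
      using kbasis_sqfree_iff[OF assms(1)] fin
      by (auto simp: indep_subsets_def card_Diff_subset finite_subset)
    show "(\<lambda>S. W - S) ` indep_subsets E W (card W - n) \<subseteq> kbasis V E (sqfree_deg W) n"
    proof
      fix F assume "F \<in> (\<lambda>S. W - S) ` indep_subsets E W (card W - n)"
      then obtain S where S: "S \<subseteq> W" "card S = card W - n" "indep_set E S" "F = W - S"
        by (auto simp: indep_subsets_def)
      then have "card F = n" "W - F = S"
        using fin assms(2) by (auto simp: card_Diff_subset finite_subset)
      then show "F \<in> kbasis V E (sqfree_deg W) n"
        using kbasis_sqfree_iff[OF assms(1)] S by auto
    qed
  qed
  then show ?thesis by (rule bij_betw_same_card)
qed

lemma kbasis_sqfree_facets:
  assumes "W \<subseteq> V" "card W = n + 1"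
  shows "kbasis V E (sqfree_deg W) n = (\<lambda>w. W - {w}) ` W"
proof -
  have fin: "finite W" using finite_subset[OF assms(1) finite_V] .
  have "F \<in> kbasis V E (sqfree_deg W) n \<longleftrightarrow> (\<exists>w\<in>W. F = W - {w})" for F
  proof
    assume "F \<in> kbasis V E (sqfree_deg W) n"
    then have F: "F \<subseteq> W" "card F = n" using kbasis_sqfree_iff[OF assms(1)] by auto
    then have "card (W - F) = 1"
      using assms(2) fin card_Diff_subset[of F W] finite_subset[of F W] by simp
    then obtain w where "W - F = {w}" by (auto simp: card_1_singleton_iff)
    then show "\<exists>w\<in>W. F = W - {w}" using F by auto
  next
    assume "\<exists>w\<in>W. F = W - {w}"
    then obtain w where w: "w \<in> W" "F = W - {w}" by blast
    then have "W - F = {w}" by auto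
    moreover have "indep_set E {w}" using irrefl by (simp add: indep_set_def)
    ultimately show "F \<in> kbasis V E (sqfree_deg W) n"
      using w fin assms by (simp add: kbasis_sqfree_iff)
  qed
  then show ?thesis by blast
qed

lemma kbasis_sqfree_top:
  assumes "W \<subseteq> V" "card W = n"
  shows "kbasis V E (sqfree_deg W) n = {W}"
proof -
  have "finite W" using finite_subset[OF assms(1) finite_V] .
  then have "F \<in> kbasis V E (sqfree_deg W) n \<longleftrightarrow> F = W" for F
    using kbasis_sqfree_iff[OF assms(1), of F n] assms(2) card_subset_eq[of W F]
    by (auto simp: indep_set_def)
  then show ?thesis by blast
qed

lemma remove_nonedge_in_kbasis_sqfree:
  assumes "W \<subseteq> V" "card W = n + 1" "u \<in> W" "w \<in> W" "u \<noteq> w" "\<not> E u w"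
  shows "W - {u, w} \<in> kbasis V E (sqfree_deg W) (n - 1)"
proof -
  have "W - (W - {u, w}) = {u, w}" using assms(3,4) by auto
  moreover have "indep_set E {u, w}" using assms(6) irrefl sym by (auto simp: indep_set_def)
  moreover have "finite W" using finite_subset[OF assms(1) finite_V] .
  then have "card (W - {u, w}) = n - 1"
    using assms(2-5) by (simp add: card_Diff_subset)
  ultimately show ?thesis using kbasis_sqfree_iff[OF assms(1)] by auto
qed

lemma inj_on_remove_singleton: "inj_on (\<lambda>w. W - {w}) W"
  by (auto simp: inj_on_def)

lemma top_coords_kcycle_sqfree:
  assumes "W \<subseteq> V" "card W = n + 1" "c \<in> kcycles V E (sqfree_deg W) n"
  shows "top_coords W c \<in> nonedge_const E W"
proof -
  have fin: "finite W" using finite_subset[OF assms(1) finite_V] .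
  let ?B = "kbasis V E (sqfree_deg W) n"
  have B: "?B = (\<lambda>w. W - {w}) ` W" by (rule kbasis_sqfree_facets[OF assms(1,2)])
  have "top_coords W c u = top_coords W c w"
    if uw: "u \<in> W" "w \<in> W" "u \<noteq> w" "\<not> E u w" for u w
  proof -
    have "kbd V E (sqfree_deg W) n c (W - {u, w}) = 0"
      using assms(3) by simp
    then have "(\<Sum>F\<in>?B. c F * kcoef F (W - {u, w})) = 0"
      using remove_nonedge_in_kbasis_sqfree[OF assms(1,2) uw] by (simp add: kbd_def)
    moreover have "\<And>F. F \<in> ?B \<Longrightarrow> F \<subseteq> W" "W - {u} \<in> ?B" "W - {w} \<in> ?B"
      using B uw by auto
    ultimately show ?thesis
      using sum_kcoef_remove_pair_eq_0_iff[OF fin finite_kbasis[OF finite_V]] uw by blast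
  qed
  then show ?thesis by (auto simp: nonedge_const_def top_coords_def)
qed

lemma nonedge_const_in_top_coords_kcycles:
  assumes "W \<subseteq> V" "card W = n + 1" "1 \<le> n" "g \<in> nonedge_const E W"
  shows "g \<in> top_coords W ` kcycles V E (sqfree_deg W) n"
proof -
  have fin: "finite W" using finite_subset[OF assms(1) finite_V] .
  let ?B = "kbasis V E (sqfree_deg W) n"
  have B: "?B = (\<lambda>w. W - {w}) ` W" by (rule kbasis_sqfree_facets[OF assms(1,2)])
  define c where "c F = (if F \<in> ?B then g (the_elem (W - F)) * kcoef W F else 0)" for F
  have c_facet: "c (W - {u}) = g u * kcoef W (W - {u})" if "u \<in> W" for u
  proof -
    have "W - (W - {u}) = {u}" using that by auto
    then show ?thesis using B that by (simp add: c_def)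
  qed
  have "top_coords W c = g"
    using c_facet kcoef_remove_square assms(4)
    by (auto simp: fun_eq_iff top_coords_def nonedge_const_def mult.assoc)
  moreover have "kbd V E (sqfree_deg W) n c G = 0" for G
  proof (cases "G \<in> kbasis V E (sqfree_deg W) (n - 1)")
    case True
    then have G: "G \<subseteq> W" "card G = n - 1" "indep_set E (W - G)"
      using kbasis_sqfree_iff[OF assms(1)] by auto
    then have "card (W - G) = 2"
      using assms(2,3) fin card_Diff_subset[of G W] finite_subset[of G W] by simp
    then obtain u w where uw0: "W - G = {u, w}" "u \<noteq> w" by (auto simp: card_2_iff)
    then have uw: "u \<in> W" "w \<in> W" "u \<noteq> w" "G = W - {u, w}" using G by auto
    have "\<not> E u w" using G(3) uw0 by (auto simp: indep_set_def)
    then have "top_coords W c u = top_coords W c w"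
      using \<open>top_coords W c = g\<close> assms(4) uw by (simp add: nonedge_const_def)
    moreover have "\<And>F. F \<in> ?B \<Longrightarrow> F \<subseteq> W" "W - {u} \<in> ?B" "W - {w} \<in> ?B"
      using B uw by auto
    ultimately have "(\<Sum>F\<in>?B. c F * kcoef F G) = 0"
      using sum_kcoef_remove_pair_eq_0_iff[OF fin finite_kbasis[OF finite_V]] uw by blast
    then show ?thesis using True by (simp add: kbd_def)
  qed (simp add: kbd_def)
  moreover have "c \<in> supported_on ?B" by (simp add: c_def supported_on_def)
  ultimately have "c \<in> kcycles V E (sqfree_deg W) n" "g = top_coords W c"
    by (auto simp: fun_eq_iff)
  then show ?thesis by blast
qed

lemma dim_kcycles_sqfree_facets:
  assumes "W \<subseteq> V" "card W = n + 1" "1 \<le> n"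
  shows "kv.dim (kcycles V E (sqfree_deg W) n :: ('v set \<Rightarrow> 'k::field) set) =
    kv.dim (nonedge_const E W :: ('v \<Rightarrow> 'k) set)"
proof -
  let ?B = "kbasis V E (sqfree_deg W) n" and ?Z = "kcycles V E (sqfree_deg W) n :: ('v set \<Rightarrow> 'k) set"
  have image: "top_coords W ` ?Z = nonedge_const E W"
    using top_coords_kcycle_sqfree[OF assms(1,2)] nonedge_const_in_top_coords_kcycles[OF assms]
    by blast
  have inj: "inj_on (top_coords W) (supported_on ?B :: ('v set \<Rightarrow> 'k) set)"
  proof (rule inj_onI, rule ext)
    fix c c' F assume c: "c \<in> supported_on ?B" "c' \<in> supported_on ?B" "top_coords W c = top_coords W c'"
    show "c F = c' F"
    proof (cases "F \<in> ?B")
      case True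
      then obtain u where "u \<in> W" "F = W - {u}" using kbasis_sqfree_facets[OF assms(1,2)] by auto
      then show ?thesis using top_coords_inverse[of u W c] top_coords_inverse[of u W c'] c(3) by simp
    qed (use c in \<open>simp add: supported_onD\<close>)
  qed
  have "kv.span ?Z \<subseteq> supported_on ?B"
    by (rule kv.span_minimal) (auto simp: subspace_supported_on)
  then have inj_span: "inj_on (top_coords W) (kv.span ?Z)"
    using inj by (rule inj_on_subset[rotated])
  have "?Z \<subseteq> kv.span (delta ` ?B)"
    using span_delta[OF finite_kbasis[OF finite_V]] by blast
  then have "kv.dim (top_coords W ` ?Z) = kv.dim ?Z"
    using kvp.dim_image_eq_if_inj_on_span[OF linear_top_coords _ _ inj_span]
      finite_imageI[OF finite_kbasis[OF finite_V]] by blast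
  then show ?thesis using image by simp
qed

lemma dim_kboundaries_sqfree_facets:
  assumes "W \<subseteq> V" "card W = n + 1"
  shows "kv.dim (kboundaries V E (sqfree_deg W) n :: ('v set \<Rightarrow> 'k::field) set) = 1"
proof -
  have top: "kbasis V E (sqfree_deg W) (n + 1) = {W}" by (rule kbasis_sqfree_top[OF assms])
  obtain w where w: "w \<in> W" using assms(2) by fastforce
  then have "W - {w} \<in> kbasis V E (sqfree_deg W) n" using kbasis_sqfree_facets[OF assms] by auto
  moreover have "kbd V E (sqfree_deg W) (n + 1) (delta W) (W - {w}) =
      (if W - {w} \<in> kbasis V E (sqfree_deg W) (n + 1 - 1) then kcoef W (W - {w}) else 0 :: 'k)"
    by (rule kbd_delta[OF finite_V]) (use top in simp)
  ultimately have "kbd V E (sqfree_deg W) (n + 1) (delta W) (W - {w}) = (kcoef W (W - {w}) :: 'k)"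
    by simp
  then have nonzero: "kbd V E (sqfree_deg W) (n + 1) (delta W) \<noteq> (0 :: 'v set \<Rightarrow> 'k)"
    using kcoef_remove_square[OF w, where 'k='k] by (metis mult_zero_left zero_fun_apply zero_neq_one)
  have "kboundaries V E (sqfree_deg W) n = kbd V E (sqfree_deg W) (n + 1) ` kv.span {delta W :: _ \<Rightarrow> 'k}"
    using span_delta[of "{W}", where 'k='k] top by simp
  also have "\<dots> = kv.span {kbd V E (sqfree_deg W) (n + 1) (delta W)}"
    using kvp.linear_span_image[OF linear_kbd[of V E "sqfree_deg W" "n + 1"], of "{delta W :: _ \<Rightarrow> 'k}"]
    by simp
  finally show ?thesis
    using nonzero by (simp add: kv.dim_eq_card_independent)
qed

lemma koszul_hdim_sqfree_facets:
  assumes "W \<subseteq> V" "card W = n + 1" "1 \<le> n"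
  shows "koszul_hdim TYPE('k::field) V E (sqfree_deg W) n = kv.dim (nonedge_const E W :: ('v \<Rightarrow> 'k) set) - 1"
  unfolding koszul_hdim_eq[OF assms(3)] dim_kcycles_sqfree_facets[OF assms]
    dim_kboundaries_sqfree_facets[OF assms(1,2)] ..

lemma dim_kboundaries_sqfree_ridges:
  assumes "W \<subseteq> V" "card W = i + 2"
  shows "kv.dim (kboundaries V E (sqfree_deg W) i :: ('v set \<Rightarrow> 'k::field) set) =
    card W - kv.dim (nonedge_const E W :: ('v \<Rightarrow> 'k) set)"
proof -
  have W: "card W = (i + 1) + 1" using assms(2) by simp
  have "card (kbasis V E (sqfree_deg W) (i + 1)) = card W"
    using kbasis_sqfree_facets[OF assms(1) W] inj_on_remove_singleton[of W] by (simp add: card_image)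
  then show ?thesis
    using rank_nullity_supported_on[OF linear_kbd[of V E "sqfree_deg W" "i + 1"]
        finite_kbasis[OF finite_V, of E "sqfree_deg W" "i + 1"], where 'k='k]
      dim_kcycles_sqfree_facets[OF assms(1) W, where 'k='k] by simp
qed

lemma kbasis_unique_coface:
  assumes W: "W \<subseteq> V" "G \<subseteq> W" "W - G = {x, y, z}" "x \<noteq> y" "x \<noteq> z" "y \<noteq> z"
      "indep_set E {x, y, z}"
    and unique: "\<And>S T. S \<in> indep_subsets E W 3 \<Longrightarrow> T \<in> indep_subsets E W 3 \<Longrightarrow>
      2 \<le> card (S \<inter> T) \<Longrightarrow> S = T"
    and G': "G' \<in> kbasis V E (sqfree_deg W) n" "kcoef (insert z G) G' \<noteq> 0"
  shows "G' = G"
proof -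
  obtain v where v: "v \<notin> G'" "insert z G = insert v G'"
    using kcoef_neq_0_imp_insert[OF G'(2)] by blast
  have G'W: "G' \<subseteq> W" "indep_set E (W - G')"
    using G'(1) kbasis_sqfree_iff[OF W(1)] by auto
  have xyz: "x \<notin> G" "y \<notin> G" "z \<notin> G" "x \<in> W" "y \<in> W" "z \<in> W"
    using W(3) by blast+
  have G'_eq: "G' = insert z G - {v}" "v \<in> insert z G"
    using v by auto
  then have vxy: "v \<in> W" "v \<noteq> x" "v \<noteq> y"
    using W(2) W(4-6) xyz by auto
  have "W - G' = (W - G - {z}) \<union> {v}"
    using G'_eq vxy(1) by auto
  also have "W - G - {z} = {x, y}"
    using W(3,5,6) by auto
  finally have "W - G' = {x, y, v}" by auto
  then have T: "{x, y, v} \<in> indep_subsets E W 3"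
    using G'W vxy W(4) by (auto simp: indep_subsets_def)
  have S: "{x, y, z} \<in> indep_subsets E W 3"
    using W(3-7) by (auto simp: indep_subsets_def)
  have "2 \<le> card ({x, y, z} \<inter> {x, y, v})"
    using card_mono[of "{x, y, z} \<inter> {x, y, v}" "{x, y}"] W(4) by auto
  then have "{x, y, z} = {x, y, v}"
    by (rule unique[OF S T])
  then have "v = z"
    using vxy by blast
  then show ?thesis
    using G'_eq xyz(3) by auto
qed

lemma delta_in_kboundaries_sqfree:
  assumes W: "W \<subseteq> V" "card W = i + 3"
    and unique: "\<And>S T. S \<in> indep_subsets E W 3 \<Longrightarrow> T \<in> indep_subsets E W 3 \<Longrightarrow>
      2 \<le> card (S \<inter> T) \<Longrightarrow> S = T"
    and G: "G \<in> kbasis V E (sqfree_deg W) i"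
  shows "delta G \<in> (kboundaries V E (sqfree_deg W) i :: ('v set \<Rightarrow> 'k::field) set)"
proof -
  have fin: "finite W" using finite_subset[OF W(1) finite_V] .
  have G1: "G \<subseteq> W" "card G = i" "indep_set E (W - G)"
    using G kbasis_sqfree_iff[OF W(1)] by auto
  then have "card (W - G) = 3"
    using W(2) fin card_Diff_subset[of G W] finite_subset[of G W] by simp
  then obtain x y z where xyz: "W - G = {x, y, z}" "x \<noteq> y" "x \<noteq> z" "y \<noteq> z"
    by (auto simp: card_3_iff)
  define F where "F = insert z G"
  have zG: "z \<in> F" "G = F - {z}" using xyz by (auto simp: F_def)
  have "W - F = {x, y}" using xyz by (auto simp: F_def)
  moreover have "indep_set E {x, y}" using G1(3) xyz by (auto simp: indep_set_def)
  moreover have "z \<notin> G" "z \<in> W" "finite G"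
    using xyz(1) G1(1) fin finite_subset by blast+
  then have "F \<subseteq> W" "card F = i + 1"
    using G1 by (auto simp: F_def)
  ultimately have F: "F \<in> kbasis V E (sqfree_deg W) (i + 1)"
    using kbasis_sqfree_iff[OF W(1)] by auto
  have "kbd V E (sqfree_deg W) (i + 1) (delta F) = kscale (kcoef F G) (delta G :: _ \<Rightarrow> 'k)"
  proof
    fix G'
    show "kbd V E (sqfree_deg W) (i + 1) (delta F) G' = kscale (kcoef F G) (delta G :: _ \<Rightarrow> 'k) G'"
      using kbd_delta[OF finite_V F, of G', where 'k='k] G G1(3) xyz
        kbasis_unique_coface[OF W(1) G1(1) xyz _ unique, of G' i]
      by (auto simp: F_def)
  qed
  then have "kbd V E (sqfree_deg W) (i + 1) (kscale (kcoef F G) (delta F)) = (delta G :: _ \<Rightarrow> 'k)"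
    using kcoef_remove_square[OF zG(1), where 'k='k] zG(2)
    by (simp add: kvp.linear_scale[OF linear_kbd] fun_eq_iff mult.assoc[symmetric])
  moreover have "kscale (kcoef F G) (delta F) \<in> (supported_on (kbasis V E (sqfree_deg W) (i + 1)) :: (_ \<Rightarrow> 'k) set)"
    using F by (simp add: supported_on_def)
  ultimately show ?thesis by (metis image_eqI)
qed

lemma dim_kcycles_sqfree_ridges:
  assumes W: "W \<subseteq> V" "card W = i + 2" "1 \<le> i"
    and unique: "\<And>S T. S \<in> indep_subsets E W 3 \<Longrightarrow> T \<in> indep_subsets E W 3 \<Longrightarrow>
      2 \<le> card (S \<inter> T) \<Longrightarrow> S = T"
  shows "kv.dim (kcycles V E (sqfree_deg W) i :: ('v set \<Rightarrow> 'k::field) set) =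
    card (indep_subsets E W 2) - card (indep_subsets E W 3)"
proof -
  let ?B = "kbasis V E (sqfree_deg W) i" and ?B' = "kbasis V E (sqfree_deg W) (i - 1)"
  let ?im = "kbd V E (sqfree_deg W) i ` supported_on ?B :: ('v set \<Rightarrow> 'k) set"
  have "delta ` ?B' \<subseteq> ?im"
    using delta_in_kboundaries_sqfree[OF W(1) _ unique, of "i - 1"] W(2,3) by auto
  then have "kv.span (delta ` ?B') \<subseteq> ?im"
    by (intro kv.span_minimal kvp.linear_subspace_image[OF linear_kbd subspace_supported_on])
  moreover have "?im \<subseteq> supported_on ?B'"
    using kbd_in_supported_on by blast
  ultimately have "?im = supported_on ?B'"
    using span_delta[OF finite_kbasis[OF finite_V]] by blast
  then have "kv.dim ?im = card ?B'"
    using dim_supported_on[OF finite_kbasis[OF finite_V], where 'k='k] by simp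
  then have "kv.dim (kcycles V E (sqfree_deg W) i :: ('v set \<Rightarrow> 'k) set) + card ?B' = card ?B"
    using rank_nullity_supported_on[OF linear_kbd[of V E "sqfree_deg W" i]
        finite_kbasis[OF finite_V, of E "sqfree_deg W" i], where 'k='k] by simp
  moreover have "card ?B = card (indep_subsets E W 2)" "card ?B' = card (indep_subsets E W 3)"
    using card_kbasis_sqfree[OF W(1)] W(2,3) by simp_all
  ultimately show ?thesis by simp
qed

end

section \<open>Multidegrees that are not squarefree\<close>

lemma inj_sqfree_deg: "inj sqfree_deg"
  by (rule injI) (metis (full_types) sqfree_deg_def subsetI subset_antisym zero_neq_one)

lemma exists_ge_2_if_not_sqfree_deg:
  fixes a :: "'v \<Rightarrow> nat"
  assumes "\<forall>v. v \<notin> V \<longrightarrow> a v = 0" "a \<notin> sqfree_deg ` Pow V"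
  shows "\<exists>t. 2 \<le> a t"
proof (rule ccontr)
  assume none: "\<nexists>t. 2 \<le> a t"
  have "a v = sqfree_deg {v. 0 < a v} v" for v
  proof -
    have "a v < 2" using none by (simp add: not_le)
    then show ?thesis by (auto simp: sqfree_deg_def less_2_cases_iff)
  qed
  then have "a = sqfree_deg {v. 0 < a v}" by (rule ext)
  moreover have "{v. 0 < a v} \<in> Pow V" using assms(1) by auto
  ultimately show False using assms(2) by blast
qed

lemma sqfree_deg_support_add_le:
  "(sqfree_deg {v. 0 < a v} + sqfree_deg {v. 2 \<le> a v}) v \<le> a v"
  by (auto simp: sqfree_deg_def)

lemma card_support_add_le_sum:
  assumes "finite V" "\<forall>v. v \<notin> V \<longrightarrow> a v = 0"
  shows "card {v. 0 < a v} + card {v. 2 \<le> a v} = sum (sqfree_deg {v. 0 < a v} + sqfree_deg {v. 2 \<le> a v}) V"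
    and "card {v. 0 < a v} + card {v. 2 \<le> a v} \<le> sum a V"
proof -
  have "{v. 0 < a v} \<subseteq> V" "{v. 2 \<le> a v} \<subseteq> V" using assms(2) by auto
  then show eq: "card {v. 0 < a v} + card {v. 2 \<le> a v} =
      sum (sqfree_deg {v. 0 < a v} + sqfree_deg {v. 2 \<le> a v}) V"
    using sum_sqfree_deg[OF assms(1)] by (simp add: sum.distrib)
  show "card {v. 0 < a v} + card {v. 2 \<le> a v} \<le> sum a V"
    unfolding eq using sqfree_deg_support_add_le by (intro sum_mono) auto
qed

lemma eq_sqfree_deg_support_add_if_sum_eq:
  assumes "finite V" "\<forall>v. v \<notin> V \<longrightarrow> a v = 0"
    and "sum a V = card {v. 0 < a v} + card {v. 2 \<le> a v}"
  shows "a = sqfree_deg {v. 0 < a v} + sqfree_deg {v. 2 \<le> a v}"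
proof
  fix v
  show "a v = (sqfree_deg {v. 0 < a v} + sqfree_deg {v. 2 \<le> a v}) v"
  proof (cases "v \<in> V")
    case True
    have sums: "sum (sqfree_deg {v. 0 < a v} + sqfree_deg {v. 2 \<le> a v}) V = sum a V"
      using card_support_add_le_sum(1)[OF assms(1,2)] assms(3) by simp
    have "(sqfree_deg {v. 0 < a v} + sqfree_deg {v. 2 \<le> a v}) v = a v"
      using sum_mono_inv[OF sums _ True assms(1)] sqfree_deg_support_add_le[of a] by blast
    then show ?thesis by simp
  qed (use assms(2) in \<open>simp add: sqfree_deg_def\<close>)
qed

lemma not_sqfree_deg_cases:
  fixes a :: "'v \<Rightarrow> nat"
  assumes V: "finite V" "\<forall>v. v \<notin> V \<longrightarrow> a v = 0" and "sum a V \<le> i + 2"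
    and "a \<notin> sqfree_deg ` Pow V"
  obtains (few_vertices) t where "2 \<le> a t" "card {v. 0 < a v} \<le> i"
    | (one_square) W t where "W \<subseteq> V" "t \<in> W" "card W = i + 1" "a = sqfree_deg W + sqfree_deg {t}"
proof -
  define W where "W = {v. 0 < a v}"
  define T where "T = {v. 2 \<le> a v}"
  obtain t where t: "t \<in> T" using exists_ge_2_if_not_sqfree_deg[OF V(2) assms(4)] by (auto simp: T_def)
  have sub: "W \<subseteq> V" "T \<subseteq> V" "t \<in> W" using V(2) t by (auto simp: W_def T_def)
  have le: "card W + card T \<le> sum a V"
    using card_support_add_le_sum(2)[OF V] by (simp add: W_def T_def)
  show ?thesis
  proof (cases "card W \<le> i")
    case True
    then show ?thesis using few_vertices t by (auto simp: W_def T_def)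
  next
    case False
    have "T \<noteq> {}" "finite T" using t finite_subset[OF sub(2) V(1)] by auto
    then have "1 \<le> card T" by (simp add: Suc_le_eq card_gt_0_iff)
    then have cards: "card W = i + 1" "card T = 1" "sum a V = card W + card T"
      using False le assms(3) by linarith+
    then have "T = {t}" using t by (auto simp: card_Suc_eq)
    moreover have "a = sqfree_deg W + sqfree_deg T"
      using eq_sqfree_deg_support_add_if_sum_eq[OF V] cards(3) by (simp add: W_def T_def)
    ultimately show ?thesis
      using one_square[OF sub(1) sub(3) cards(1)] by simp
  qed
qed

context simple_graph
begin

lemma kcycles_eq_0_if_few_vertices:
  assumes "\<forall>v. v \<notin> V \<longrightarrow> a v = 0" "card {v. 0 < a v} \<le> i" "2 \<le> a t"
    and c: "c \<in> (kcycles V E a i :: ('v set \<Rightarrow> 'k::field) set)"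
  shows "c = 0"
proof
  fix F
  define W where "W = {v. 0 < a v}"
  have "W \<subseteq> V" "t \<in> W" using assms(1,3) by (auto simp: W_def)
  then have W: "W \<subseteq> V" "finite W" "t \<in> W" using finite_subset[OF _ finite_V] by auto
  have in_basis: "F' = W" if "F' \<in> kbasis V E a i" for F'
  proof -
    have "F' \<subseteq> W" "card F' = i" using that by (auto simp: kbasis_def W_def)
    then show "F' = W" using card_seteq[OF W(2)] assms(2) by (simp add: W_def)
  qed
  show "c F = 0 F"
  proof (cases "F \<in> kbasis V E a i")
    case True
    then have "F = W" "kbasis V E a i = {W}" using in_basis by blast+
    then have "W \<in> kbasis V E a i" by simp
    then have "card W = i" "\<not> in_edge_ideal E (\<lambda>v. a v - (if v \<in> W then 1 else 0))"
      by (simp_all add: kbasis_def)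
    moreover have "{v. 0 < a v - (if v \<in> W - {t} then 1 else 0)} =
        {v. 0 < a v - (if v \<in> W then 1 else 0)}"
      using assms(3) by auto
    ultimately have "W - {t} \<in> kbasis V E a (i - 1)"
      using W by (simp add: kbasis_def in_edge_ideal_iff) (auto simp: W_def)
    moreover have "kbd V E a i c (W - {t}) = 0" using c by simp
    ultimately have "c W * kcoef W (W - {t}) = 0"
      using \<open>kbasis V E a i = {W}\<close> by (simp add: kbd_def)
    then show ?thesis
      using kcoef_remove_square[OF W(3), where 'k='k] \<open>F = W\<close>
      by (metis mult.assoc mult_1_right mult_zero_left zero_fun_apply)
  qed (use c in \<open>auto simp: supported_on_def\<close>)
qed

lemma koszul_hdim_eq_0_if_few_vertices:
  assumes "\<forall>v. v \<notin> V \<longrightarrow> a v = 0" "1 \<le> i" "card {v. 0 < a v} \<le> i" "2 \<le> a t"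
  shows "koszul_hdim TYPE('k::field) V E a i = 0"
proof -
  have "kcycles V E a i \<subseteq> {0 :: 'v set \<Rightarrow> 'k}"
    using kcycles_eq_0_if_few_vertices[OF assms(1,3,4)] by blast
  then have "kv.dim (kcycles V E a i :: ('v set \<Rightarrow> 'k) set) = 0"
    using kv.dim_le_card[of "kcycles V E a i" "{}"] by auto
  then show ?thesis unfolding koszul_hdim_eq[OF assms(2)] by simp
qed

lemma kbasis_sqfree_plus_iff:
  assumes "W \<subseteq> V" "t \<in> W"
  shows "F \<in> kbasis V E (sqfree_deg W + sqfree_deg {t}) n \<longleftrightarrow>
    F \<subseteq> W \<and> card F = n \<and> indep_set E (insert t (W - F))"
proof -
  have supp: "{v. 0 < (sqfree_deg W + sqfree_deg {t}) v - (if v \<in> F then 1 else 0)} = insert t (W - F)"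
    if "F \<subseteq> W" using that assms(2) by (auto simp: sqfree_deg_def)
  show ?thesis
  proof
    assume F: "F \<in> kbasis V E (sqfree_deg W + sqfree_deg {t}) n"
    then have "F \<subseteq> W" using assms(2) by (auto simp: kbasis_def sqfree_deg_def split: if_splits)
    then show "F \<subseteq> W \<and> card F = n \<and> indep_set E (insert t (W - F))"
      using F supp by (auto simp: kbasis_def in_edge_ideal_iff)
  next
    assume "F \<subseteq> W \<and> card F = n \<and> indep_set E (insert t (W - F))"
    then show "F \<in> kbasis V E (sqfree_deg W + sqfree_deg {t}) n"
      using supp assms by (auto simp: kbasis_def in_edge_ideal_iff sqfree_deg_def)
  qed
qed

lemma top_coords_kcycle_sqfree_plus:
  assumes W: "W \<subseteq> V" "t \<in> W" "card W = i + 1"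
    and c: "c \<in> kcycles V E (sqfree_deg W + sqfree_deg {t}) i"
    and w: "w \<in> W" "W - {w} \<in> kbasis V E (sqfree_deg W + sqfree_deg {t}) i"
  shows "top_coords W c w = top_coords W c t"
proof (cases "w = t")
  case False
  let ?a = "sqfree_deg W + sqfree_deg {t}"
  have fin: "finite W" using finite_subset[OF W(1) finite_V] .
  have "insert t (W - (W - {w, t})) = insert t (W - (W - {w}))" using w(1) W(2) by auto
  then have "W - {w, t} \<in> kbasis V E ?a (i - 1)"
    using w False W fin by (auto simp: kbasis_sqfree_plus_iff card_Diff_subset)
  moreover have "kbd V E ?a i c (W - {w, t}) = 0" using c by simp
  ultimately have "(\<Sum>F\<in>kbasis V E ?a i. c F * kcoef F (W - {w, t})) = 0"
    by (simp add: kbd_def)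
  moreover have "indep_set E (insert t (W - (W - {t})))"
    using irrefl W(2) by (simp add: indep_set_def Diff_Diff_Int Int_absorb1)
  then have "W - {t} \<in> kbasis V E ?a i"
    using W fin by (simp add: kbasis_sqfree_plus_iff)
  moreover have "\<And>F. F \<in> kbasis V E ?a i \<Longrightarrow> F \<subseteq> W"
    using kbasis_sqfree_plus_iff[OF W(1,2)] by blast
  ultimately show ?thesis
    using sum_kcoef_remove_pair_eq_0_iff[OF fin finite_kbasis[OF finite_V]] w W(2) False by blast
qed simp

lemma kcycle_sqfree_plus_eq:
  fixes c :: "'v set \<Rightarrow> 'k::field"
  assumes W: "W \<subseteq> V" "t \<in> W" "card W = i + 1"
    and c: "c \<in> kcycles V E (sqfree_deg W + sqfree_deg {t}) i"
  shows "c = kscale (top_coords W c t) (kbd V E (sqfree_deg W + sqfree_deg {t}) (i + 1) (delta W))"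
proof
  fix G
  let ?a = "sqfree_deg W + sqfree_deg {t}"
  have fin: "finite W" using finite_subset[OF W(1) finite_V] .
  have "indep_set E {t}" using irrefl by (simp add: indep_set_def)
  then have top: "W \<in> kbasis V E ?a (i + 1)"
    using W by (simp add: kbasis_sqfree_plus_iff)
  show "c G = kscale (top_coords W c t) (kbd V E ?a (i + 1) (delta W)) G"
  proof (cases "G \<in> kbasis V E ?a i")
    case True
    then have G: "G \<subseteq> W" "card G = i" using kbasis_sqfree_plus_iff[OF W(1,2)] by auto
    then have "card (W - G) = 1"
      using W(3) fin card_Diff_subset[of G W] finite_subset[of G W] by simp
    then obtain w where "W - G = {w}" by (auto simp: card_1_singleton_iff)
    then have w: "w \<in> W" "G = W - {w}" using G(1) by auto
    have "c G = top_coords W c t * kcoef W G"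
      using top_coords_inverse[OF w(1), of c] top_coords_kcycle_sqfree_plus[OF W c w(1)] True w(2)
      by simp
    then show ?thesis
      using kbd_delta[OF finite_V top, of G, where 'k='k] True by simp
  next
    case False
    then show ?thesis
      using c kbd_delta[OF finite_V top, of G, where 'k='k] by (simp add: supported_on_def)
  qed
qed

lemma koszul_hdim_sqfree_plus_eq_0:
  assumes "W \<subseteq> V" "t \<in> W" "card W = i + 1" "1 \<le> i"
  shows "koszul_hdim TYPE('k::field) V E (sqfree_deg W + sqfree_deg {t}) i = 0"
proof -
  let ?a = "sqfree_deg W + sqfree_deg {t}"
  let ?Z = "kcycles V E ?a i :: ('v set \<Rightarrow> 'k) set" and ?B = "kboundaries V E ?a i :: ('v set \<Rightarrow> 'k) set"
  have "W \<in> kbasis V E ?a (i + 1)"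
    using irrefl assms(1-3) by (simp add: kbasis_sqfree_plus_iff indep_set_def)
  then have "delta W \<in> (supported_on (kbasis V E ?a (i + 1)) :: ('v set \<Rightarrow> 'k) set)"
    by (rule delta_in_supported_on)
  then have boundary: "kbd V E ?a (i + 1) (delta W) \<in> ?B" by (rule imageI)
  have "?Z \<subseteq> kv.span ?B"
  proof
    fix c assume c: "c \<in> ?Z"
    have "kscale (top_coords W c t) (kbd V E ?a (i + 1) (delta W)) \<in> kv.span ?B"
      by (rule kv.span_scale[OF kv.span_base[OF boundary]])
    then show "c \<in> kv.span ?B"
      by (subst kcycle_sqfree_plus_eq[OF assms(1-3) c])
  qed
  moreover have "?B \<subseteq> supported_on (kbasis V E ?a i)"
    using kbd_in_supported_on[of V E ?a "i + 1"] by auto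
  then have "?B \<subseteq> kv.span (delta ` kbasis V E ?a i)"
    using span_delta[OF finite_kbasis[OF finite_V]] by blast
  ultimately have "kv.dim ?Z \<le> kv.dim ?B"
    by (rule kv.dim_le_dim_if_subset_span) (simp add: finite_kbasis[OF finite_V])
  then show ?thesis unfolding koszul_hdim_eq[OF assms(4)] by simp
qed

lemma koszul_hdim_eq_0_if_not_sqfree:
  assumes "\<forall>v. v \<notin> V \<longrightarrow> a v = 0" "sum a V \<le> i + 2" "1 \<le> i" "a \<notin> sqfree_deg ` Pow V"
  shows "koszul_hdim TYPE('k::field) V E a i = 0"
proof (rule not_sqfree_deg_cases[OF finite_V assms(1,2,4)])
  fix t assume "2 \<le> a t" "card {v. 0 < a v} \<le> i"
  then show ?thesis by (intro koszul_hdim_eq_0_if_few_vertices[OF assms(1,3)])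
next
  fix W t assume "W \<subseteq> V" "t \<in> W" "card W = i + 1" "a = sqfree_deg W + sqfree_deg {t}"
  then show ?thesis using koszul_hdim_sqfree_plus_eq_0[OF _ _ _ assms(3)] by simp
qed

lemma betti_eq_sum_sqfree:
  assumes "1 \<le> i" "j \<le> i + 2"
  shows "betti TYPE('k::field) V E i j = (\<Sum>W | W \<subseteq> V \<and> card W = j. koszul_hdim TYPE('k) V E (sqfree_deg W) i)"
proof -
  define A where "A = {a. (\<forall>v. v \<notin> V \<longrightarrow> a v = 0) \<and> sum a V = j}"
  have "A \<subseteq> {a. \<forall>v. (v \<in> V \<longrightarrow> a v \<in> {0..j}) \<and> (v \<notin> V \<longrightarrow> a v = 0)}"
    using member_le_sum[OF _ _ finite_V] by (fastforce simp: A_def)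
  then have "finite A"
    by (rule finite_subset) (rule finite_set_of_finite_funs[OF finite_V], simp)
  moreover have "sqfree_deg ` {W. W \<subseteq> V \<and> card W = j} \<subseteq> A"
    using sum_sqfree_deg[OF finite_V] by (auto simp: A_def sqfree_deg_def)
  moreover have "koszul_hdim TYPE('k) V E a i = 0"
    if a: "a \<in> A - sqfree_deg ` {W. W \<subseteq> V \<and> card W = j}" for a
  proof (rule koszul_hdim_eq_0_if_not_sqfree)
    show "\<forall>v. v \<notin> V \<longrightarrow> a v = 0" "sum a V \<le> i + 2" using a assms(2) by (auto simp: A_def)
    show "a \<notin> sqfree_deg ` Pow V" using a sum_sqfree_deg[OF finite_V] by (auto simp: A_def)
  qed (rule assms(1))
  ultimately have "betti TYPE('k) V E i j = (\<Sum>a\<in>sqfree_deg ` {W. W \<subseteq> V \<and> card W = j}. koszul_hdim TYPE('k) V E a i)"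
    unfolding betti_def A_def[symmetric] by (intro sum.mono_neutral_right) auto
  also have "\<dots> = (\<Sum>W | W \<subseteq> V \<and> card W = j. koszul_hdim TYPE('k) V E (sqfree_deg W) i)"
    by (rule sum.reindex[OF inj_on_subset[OF inj_sqfree_deg], unfolded comp_def]) simp
  finally show ?thesis .
qed

end

section \<open>Arithmetic on the cycle\<close>

definition cyc_pred :: "nat \<Rightarrow> nat \<Rightarrow> nat" where
  "cyc_pred k u = (u + k - 1) mod k"

text \<open>Since k - 1 = -1 modulo k, this is the vertex s steps before u on the k-cycle.\<close>

definition cyc_back :: "nat \<Rightarrow> nat \<Rightarrow> nat \<Rightarrow> nat" where
  "cyc_back k u s = (u + (k - 1) * s) mod k"

lemma cyc_pred_lt: "0 < k \<Longrightarrow> cyc_pred k u < k"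
  by (simp add: cyc_pred_def)

lemma cyc_pred_eq: "u < k \<Longrightarrow> cyc_pred k u = (if u = 0 then k - 1 else u - 1)"
proof (cases "u = 0")
  case False
  assume "u < k"
  have "cyc_pred k u = (u - 1 + k) mod k"
    unfolding cyc_pred_def using False by (metis Nat.add_diff_assoc2 add.commute less_one not_le)
  also have "\<dots> = u - 1" using \<open>u < k\<close> by simp
  finally show ?thesis using False by simp
qed (simp add: cyc_pred_def)

lemma cyc_pred_neq: "2 \<le> k \<Longrightarrow> u < k \<Longrightarrow> cyc_pred k u \<noteq> u"
  by (auto simp: cyc_pred_eq)

lemma cyc_pred_pred_neq: "3 \<le> k \<Longrightarrow> u < k \<Longrightarrow> cyc_pred k (cyc_pred k u) \<noteq> u"
  using cyc_pred_lt[of k u] by (auto simp: cyc_pred_eq split: if_splits)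

lemma cyc_back_0: "u < k \<Longrightarrow> cyc_back k u 0 = u"
  by (simp add: cyc_back_def)

lemma cyc_back_Suc: "0 < k \<Longrightarrow> cyc_back k u (Suc s) = cyc_pred k (cyc_back k u s)"
proof -
  assume "0 < k"
  then have "cyc_pred k (cyc_back k u s) = ((u + (k - 1) * s) mod k + (k - 1)) mod k"
    by (simp add: cyc_pred_def cyc_back_def)
  also have "\<dots> = (u + (k - 1) * s + (k - 1)) mod k"
    by (simp add: mod_add_left_eq)
  also have "u + (k - 1) * s + (k - 1) = u + (k - 1) * Suc s"
    by simp
  finally show ?thesis by (simp add: cyc_back_def)
qed

lemma cyc_back_pred: "0 < k \<Longrightarrow> cyc_back k (cyc_pred k u) s = cyc_back k u (Suc s)"
proof -
  assume "0 < k"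
  then have "cyc_back k (cyc_pred k u) s = ((u + (k - 1)) mod k + (k - 1) * s) mod k"
    by (simp add: cyc_pred_def cyc_back_def)
  also have "\<dots> = (u + (k - 1) * Suc s) mod k"
    by (simp add: mod_add_left_eq add.assoc)
  finally show ?thesis by (simp add: cyc_back_def)
qed

lemma cyc_back_surj:
  assumes u: "u < k" and v: "v < k"
  shows "\<exists>m. cyc_back k u m = v"
proof -
  define m where "m = (u + k - v) mod k"
  have vm: "(v + m) mod k = u"
  proof (cases "v \<le> u")
    case True
    have e: "u + k - v = (u - v) + k" using True by simp
    have "u - v < k" using u by simp
    then have "m = u - v" unfolding m_def e by simp
    then show ?thesis using True u by simp
  next
    case False
    have "u + k - v < k" using False v by linarith
    then have "m = u + k - v" unfolding m_def by simp
    then have "v + m = u + k" using False v by simp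
    then show ?thesis using u by simp
  qed
  have "cyc_back k u m = ((v + m) mod k + (k - 1) * m) mod k"
    using vm by (simp add: cyc_back_def)
  also have "\<dots> = (v + m + (k - 1) * m) mod k"
    by (rule mod_add_left_eq)
  also have "v + m + (k - 1) * m = v + k * m"
    using u by (cases k) simp_all
  also have "(v + k * m) mod k = v"
    using v by simp
  finally show ?thesis by blast
qed

lemma cycle_adj_iff:
  "cycle_adj k a b \<longleftrightarrow> a < k \<and> b < k \<and> a \<noteq> b \<and>
    (b = a + 1 \<or> a = b + 1 \<or> (a + 1 = k \<and> b = 0) \<or> (b + 1 = k \<and> a = 0))"
  unfolding cycle_adj_def by (cases "a + 1 = k"; cases "b + 1 = k") auto

lemma cycle_adj_commute: "cycle_adj k a b \<longleftrightarrow> cycle_adj k b a"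
  by (auto simp: cycle_adj_def)

lemma cycle_adj_pred_iff:
  assumes "2 \<le> k" "u < k" "v < k"
  shows "cycle_adj k u v \<longleftrightarrow> u = cyc_pred k v \<or> v = cyc_pred k u"
  using assms unfolding cycle_adj_iff cyc_pred_eq[OF assms(2)] cyc_pred_eq[OF assms(3)] by auto

lemma cycle_adj_triangle:
  assumes "cycle_adj k a b" "cycle_adj k a c" "cycle_adj k b c" "a \<noteq> b" "a \<noteq> c" "b \<noteq> c"
  shows "k = 3"
  using assms unfolding cycle_adj_iff by auto

lemma cycle_adj_3: "a < 3 \<Longrightarrow> b < 3 \<Longrightarrow> a \<noteq> b \<Longrightarrow> cycle_adj 3 a b"
  unfolding cycle_adj_iff by linarith

lemma cycle_adj_2: "a < 2 \<Longrightarrow> b < 2 \<Longrightarrow> a \<noteq> b \<Longrightarrow> cycle_adj 2 a b"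
  unfolding cycle_adj_iff by linarith

section \<open>The join of complements of cycles\<close>

abbreviation cocycle_join_V :: "nat \<Rightarrow> nat \<Rightarrow> (nat \<times> nat) set" where
  "cocycle_join_V d k \<equiv> join_copies_V d {..<k}"

abbreviation cocycle_join_E :: "nat \<Rightarrow> nat \<Rightarrow> (nat \<times> nat) \<Rightarrow> (nat \<times> nat) \<Rightarrow> bool" where
  "cocycle_join_E d k \<equiv> join_copies_E d {..<k} (cocycle_edge k)"

lemma cocycle_join_V_eq: "cocycle_join_V d k = {..<d} \<times> {..<k}"
  by (simp add: join_copies_V_def)

lemma simple_graph_cocycle_join:
  assumes "2 \<le> k"
  shows "simple_graph (cocycle_join_V d k) (cocycle_join_E d k)"
  by unfold_locales
    (auto simp: join_copies_V_def join_copies_E_def cocycle_edge_def cycle_adj_def)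

lemma not_cocycle_join_E_iff:
  assumes "x \<in> cocycle_join_V d k" "y \<in> cocycle_join_V d k" "x \<noteq> y"
  shows "\<not> cocycle_join_E d k x y \<longleftrightarrow> fst x = fst y \<and> cycle_adj k (snd x) (snd y)"
  using assms by (cases x, cases y)
    (auto simp: join_copies_E_def join_copies_V_def cocycle_edge_def cycle_adj_def)

lemma indep_set_cocycle_join_iff:
  assumes "S \<subseteq> cocycle_join_V d k"
  shows "indep_set (cocycle_join_E d k) S \<longleftrightarrow>
    (\<forall>x\<in>S. \<forall>y\<in>S. x \<noteq> y \<longrightarrow> fst x = fst y \<and> cycle_adj k (snd x) (snd y))"
  unfolding indep_set_def
proof (intro iffI ballI impI)
  fix x y assume "\<forall>u\<in>S. \<forall>v\<in>S. \<not> cocycle_join_E d k u v" and xy: "x \<in> S" "y \<in> S" "x \<noteq> y"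
  then have "\<not> cocycle_join_E d k x y" by blast
  moreover have "x \<in> cocycle_join_V d k" "y \<in> cocycle_join_V d k" using xy assms by blast+
  ultimately show "fst x = fst y \<and> cycle_adj k (snd x) (snd y)"
    using not_cocycle_join_E_iff xy(3) by blast
next
  fix u v assume H: "\<forall>x\<in>S. \<forall>y\<in>S. x \<noteq> y \<longrightarrow> fst x = fst y \<and> cycle_adj k (snd x) (snd y)"
    and uv: "u \<in> S" "v \<in> S"
  show "\<not> cocycle_join_E d k u v"
  proof (cases "u = v")
    case False
    moreover have "u \<in> cocycle_join_V d k" "v \<in> cocycle_join_V d k" using uv assms by blast+
    ultimately show ?thesis
      using not_cocycle_join_E_iff H uv by blast
  qed (simp add: join_copies_E_def cocycle_edge_def)
qed

text \<open>The complement of the join restricted to W is a disjoint union of full cycles and of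
  runs of consecutive vertices. A full copy j is represented by (j, 0) and a run by its first
  vertex, the element of W whose predecessor is not in W; comp_rep walks back to it, the
  LEAST being over a nonempty set because the copy is not full.\<close>

definition full_copy :: "nat \<Rightarrow> (nat \<times> nat) set \<Rightarrow> nat \<Rightarrow> bool" where
  "full_copy k W j \<longleftrightarrow> (\<forall>u<k. (j, u) \<in> W)"
definition pred_in :: "nat \<Rightarrow> (nat \<times> nat) set \<Rightarrow> (nat \<times> nat) set" where
  "pred_in k W = {x\<in>W. (fst x, cyc_pred k (snd x)) \<in> W}"
definition full_copies :: "nat \<Rightarrow> nat \<Rightarrow> (nat \<times> nat) set \<Rightarrow> nat set" where
  "full_copies k d W = {j. j < d \<and> full_copy k W j}"
definition comp_reps :: "nat \<Rightarrow> nat \<Rightarrow> (nat \<times> nat) set \<Rightarrow> (nat \<times> nat) set" where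
  "comp_reps k d W = (W - pred_in k W) \<union> (\<lambda>j. (j, 0)) ` full_copies k d W"
definition comp_rep :: "nat \<Rightarrow> (nat \<times> nat) set \<Rightarrow> nat \<times> nat \<Rightarrow> nat \<times> nat" where
  "comp_rep k W x = (if full_copy k W (fst x) then (fst x, 0)
      else (fst x, cyc_back k (snd x) (LEAST s. (fst x, cyc_back k (snd x) (Suc s)) \<notin> W)))"

definition restrict_comp_reps :: "nat \<Rightarrow> nat \<Rightarrow> (nat \<times> nat) set \<Rightarrow> (nat \<times> nat \<Rightarrow> 'k::field) \<Rightarrow> nat \<times> nat \<Rightarrow> 'k"
  where "restrict_comp_reps k d W g x = (if x \<in> comp_reps k d W then g x else 0)"

context
  fixes k d :: nat and W :: "(nat \<times> nat) set"
  assumes k2: "2 \<le> k" and WV: "W \<subseteq> {..<d} \<times> {..<k}"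
begin

lemma nonedge_const_cocycle_join_iff:
  "g \<in> nonedge_const (cocycle_join_E d k) W \<longleftrightarrow> (\<forall>x. x \<notin> W \<longrightarrow> g x = 0) \<and>
     (\<forall>j u. (j, u) \<in> W \<longrightarrow> (j, cyc_pred k u) \<in> W \<longrightarrow> g (j, u) = g (j, cyc_pred k u))"
proof -
  have W: "W \<subseteq> cocycle_join_V d k" using WV by (simp add: cocycle_join_V_eq)
  have "(\<forall>x\<in>W. \<forall>y\<in>W. \<not> cocycle_join_E d k x y \<longrightarrow> g x = g y) \<longleftrightarrow>
      (\<forall>j u. (j, u) \<in> W \<longrightarrow> (j, cyc_pred k u) \<in> W \<longrightarrow> g (j, u) = g (j, cyc_pred k u))"
  proof (intro iffI allI impI ballI)
    fix j u assume H: "\<forall>x\<in>W. \<forall>y\<in>W. \<not> cocycle_join_E d k x y \<longrightarrow> g x = g y"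
      and ju: "(j, u) \<in> W" "(j, cyc_pred k u) \<in> W"
    have u: "u < k" "cyc_pred k u < k" using ju WV by auto
    then have "cycle_adj k u (cyc_pred k u)" using cycle_adj_pred_iff[OF k2] by simp
    moreover have "u \<noteq> cyc_pred k u" using cyc_pred_neq[OF k2 u(1)] by metis
    ultimately have "\<not> cocycle_join_E d k (j, u) (j, cyc_pred k u)"
      using not_cocycle_join_E_iff[of "(j, u)" d k "(j, cyc_pred k u)"] ju W by auto
    then show "g (j, u) = g (j, cyc_pred k u)" using H ju by blast
  next
    fix x y assume R: "\<forall>j u. (j, u) \<in> W \<longrightarrow> (j, cyc_pred k u) \<in> W \<longrightarrow> g (j, u) = g (j, cyc_pred k u)"
      and xy: "x \<in> W" "y \<in> W" "\<not> cocycle_join_E d k x y"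
    show "g x = g y"
    proof (cases "x = y")
      case False
      have "x \<in> cocycle_join_V d k" "y \<in> cocycle_join_V d k" using W xy by blast+
      then have "fst x = fst y \<and> cycle_adj k (snd x) (snd y)"
        using not_cocycle_join_E_iff False xy(3) by blast
      moreover have "snd x < k" "snd y < k" using xy WV by auto
      ultimately have "fst x = fst y \<and> (snd x = cyc_pred k (snd y) \<or> snd y = cyc_pred k (snd x))"
        using cycle_adj_pred_iff[OF k2] by blast
      then show ?thesis using R xy by (cases x, cases y) auto
    qed simp
  qed
  then show ?thesis by (simp add: nonedge_const_def)
qed

lemma finite_W: "finite W"
  using finite_subset[OF WV] by blast

lemma exists_cyc_back_notin:
  assumes "(j, u) \<in> W" "\<not> full_copy k W j"
  shows "\<exists>s. (j, cyc_back k u (Suc s)) \<notin> W"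
proof -
  obtain v where v: "v < k" "(j, v) \<notin> W" using assms(2) by (auto simp: full_copy_def)
  have u: "u < k" using assms(1) WV by auto
  obtain m where m: "cyc_back k u m = v" using cyc_back_surj[OF u v(1)] by blast
  moreover have "m \<noteq> 0"
    using m cyc_back_0[OF u] assms(1) v(2) by (metis)
  ultimately show ?thesis using v(2) by (metis not0_implies_Suc)
qed

lemma cyc_back_in_W:
  assumes "(j, u) \<in> W" "t \<le> (LEAST s. (j, cyc_back k u (Suc s)) \<notin> W)"
  shows "(j, cyc_back k u t) \<in> W"
proof (cases t)
  case 0
  then show ?thesis using assms(1) WV cyc_back_0 by auto
next
  case (Suc t')
  then have "t' < (LEAST s. (j, cyc_back k u (Suc s)) \<notin> W)" using assms(2) by simp
  then show ?thesis using Suc not_less_Least by blast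
qed

lemma nonedge_const_pred_eq:
  assumes "g \<in> nonedge_const (cocycle_join_E d k) W" "(j, u) \<in> W" "(j, cyc_pred k u) \<in> W"
  shows "g (j, cyc_pred k u) = g (j, u)"
  using assms(1)[unfolded nonedge_const_cocycle_join_iff] assms(2,3) by metis

lemma nonedge_const_cyc_back:
  assumes "(j, u) \<in> W" "g \<in> nonedge_const (cocycle_join_E d k) W"
  shows "t \<le> (LEAST s. (j, cyc_back k u (Suc s)) \<notin> W) \<Longrightarrow> g (j, cyc_back k u t) = g (j, u)"
proof (induction t)
  case 0
  then show ?case using assms(1) WV cyc_back_0 by auto
next
  case (Suc t)
  then have IH: "g (j, cyc_back k u t) = g (j, u)" by simp
  have step: "cyc_back k u (Suc t) = cyc_pred k (cyc_back k u t)"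
    using cyc_back_Suc k2 by simp
  have "t \<le> (LEAST s. (j, cyc_back k u (Suc s)) \<notin> W)" using Suc.prems by simp
  then have "(j, cyc_back k u t) \<in> W" by (rule cyc_back_in_W[OF assms(1)])
  moreover have "(j, cyc_back k u (Suc t)) \<in> W" by (rule cyc_back_in_W[OF assms(1) Suc.prems])
  then have "(j, cyc_pred k (cyc_back k u t)) \<in> W" by (simp only: step)
  ultimately have "g (j, cyc_pred k (cyc_back k u t)) = g (j, cyc_back k u t)"
    by (rule nonedge_const_pred_eq[OF assms(2)])
  then show ?case using IH step by (simp only:)
qed

lemma nonedge_const_full_copy:
  assumes "full_copy k W j" "g \<in> nonedge_const (cocycle_join_E d k) W"
  shows "u < k \<Longrightarrow> g (j, u) = g (j, 0)"
proof (induction u)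
  case (Suc u)
  have "(j, Suc u) \<in> W" "(j, u) \<in> W" "cyc_pred k (Suc u) = u"
    using assms(1) Suc.prems by (auto simp: full_copy_def cyc_pred_eq)
  then have "g (j, Suc u) = g (j, u)"
    using nonedge_const_pred_eq[OF assms(2), of j "Suc u"] by simp
  then show ?case using Suc by simp
qed simp

lemma comp_rep_in_comp_reps:
  assumes "x \<in> W"
  shows "comp_rep k W x \<in> comp_reps k d W"
proof (cases "full_copy k W (fst x)")
  case True
  then have "fst x \<in> full_copies k d W" using assms WV by (auto simp: full_copies_def)
  then show ?thesis using True by (auto simp: comp_rep_def comp_reps_def)
next
  case False
  obtain j u where x: "x = (j, u)" by (cases x)
  define s0 where "s0 = (LEAST s. (j, cyc_back k u (Suc s)) \<notin> W)"
  have ju: "(j, u) \<in> W" using assms x by simp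
  have "(j, cyc_back k u s0) \<in> W"
    unfolding s0_def by (rule cyc_back_in_W[OF ju order_refl])
  moreover obtain s1 where "(j, cyc_back k u (Suc s1)) \<notin> W"
    using exists_cyc_back_notin[OF ju] False x by auto
  then have "(j, cyc_back k u (Suc s0)) \<notin> W"
    unfolding s0_def by (rule LeastI)
  then have "(j, cyc_pred k (cyc_back k u s0)) \<notin> W"
    using cyc_back_Suc[of k u s0] k2 by simp
  ultimately have "(j, cyc_back k u s0) \<in> W - pred_in k W" by (simp add: pred_in_def)
  moreover have "comp_rep k W x = (j, cyc_back k u s0)"
    using False x by (simp add: comp_rep_def s0_def)
  ultimately show ?thesis by (simp add: comp_reps_def)
qed

lemma nonedge_const_comp_rep:
  assumes "x \<in> W" "g \<in> nonedge_const (cocycle_join_E d k) W"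
  shows "g (comp_rep k W x) = g x"
proof (cases "full_copy k W (fst x)")
  case True
  then show ?thesis
    using nonedge_const_full_copy[OF True assms(2), of "snd x"] assms(1) WV
    by (auto simp: comp_rep_def)
next
  case False
  then show ?thesis
    using nonedge_const_cyc_back[of "fst x" "snd x" g] assms by (simp add: comp_rep_def)
qed

lemma comp_rep_idem:
  assumes "r \<in> comp_reps k d W"
  shows "comp_rep k W r = r"
proof (cases "r \<in> W - pred_in k W")
  case True
  obtain j u where r: "r = (j, u)" by (cases r)
  have u: "u < k" using True WV r by auto
  have "\<not> full_copy k W j"
    using True r cyc_pred_lt[of k u] k2 by (auto simp: full_copy_def pred_in_def)
  moreover have "(j, cyc_back k u (Suc 0)) \<notin> W"
    using True r cyc_back_Suc[of k u 0] cyc_back_0[OF u] k2 by (simp add: pred_in_def)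
  then have "(LEAST s. (j, cyc_back k u (Suc s)) \<notin> W) = 0" by (rule Least_eq_0)
  ultimately show ?thesis using r cyc_back_0[OF u] by (simp add: comp_rep_def)
next
  case False
  then obtain j where "r = (j, 0)" "j \<in> full_copies k d W" using assms by (auto simp: comp_reps_def)
  then show ?thesis by (simp add: comp_rep_def full_copies_def)
qed

lemma comp_rep_pred:
  assumes "(j, u) \<in> W" "(j, cyc_pred k u) \<in> W"
  shows "comp_rep k W (j, cyc_pred k u) = comp_rep k W (j, u)"
proof (cases "full_copy k W j")
  case False
  have k0: "0 < k" using k2 by simp
  have u: "u < k" using assms(1) WV by auto
  define P where "P s \<longleftrightarrow> (j, cyc_back k u (Suc s)) \<notin> W" for s
  obtain s1 where "P s1" using exists_cyc_back_notin[OF assms(1) False] by (auto simp: P_def)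
  moreover have "\<not> P 0" using assms(2) cyc_back_Suc[OF k0, of u 0] cyc_back_0[OF u] by (simp add: P_def)
  ultimately have "(LEAST s. P s) = Suc (LEAST s. P (Suc s))" by (rule Least_Suc)
  then show ?thesis
    using False by (simp add: comp_rep_def P_def cyc_back_pred[OF k0])
qed (simp add: comp_rep_def)

lemma comp_reps_subset: "comp_reps k d W \<subseteq> W"
  using k2 by (auto simp: comp_reps_def full_copies_def full_copy_def)

lemma inj_on_restrict_comp_reps:
  "inj_on (restrict_comp_reps k d W) (nonedge_const (cocycle_join_E d k) W :: (_ \<Rightarrow> 'k::field) set)"
proof (rule inj_onI, rule ext)
  fix g g' :: "nat \<times> nat \<Rightarrow> 'k" and x
  assume g: "g \<in> nonedge_const (cocycle_join_E d k) W" "g' \<in> nonedge_const (cocycle_join_E d k) W"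
    and eq: "restrict_comp_reps k d W g = restrict_comp_reps k d W g'"
  show "g x = g' x"
  proof (cases "x \<in> W")
    case True
    have "comp_rep k W x \<in> comp_reps k d W" by (rule comp_rep_in_comp_reps[OF True])
    then have "g (comp_rep k W x) = g' (comp_rep k W x)"
      using fun_cong[OF eq, of "comp_rep k W x"] by (simp add: restrict_comp_reps_def)
    then show ?thesis
      using nonedge_const_comp_rep[OF True g(1)] nonedge_const_comp_rep[OF True g(2)] by simp
  qed (use nonedge_constD[OF g(1)] nonedge_constD[OF g(2)] in simp)
qed

lemma restrict_comp_reps_image:
  "restrict_comp_reps k d W ` nonedge_const (cocycle_join_E d k) W =
    (supported_on (comp_reps k d W) :: (_ \<Rightarrow> 'k::field) set)"
proof
  show "restrict_comp_reps k d W ` nonedge_const (cocycle_join_E d k) W \<subseteq> (supported_on (comp_reps k d W) :: (_ \<Rightarrow> 'k) set)"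
    by (auto simp: restrict_comp_reps_def supported_on_def)
  show "(supported_on (comp_reps k d W) :: (_ \<Rightarrow> 'k) set) \<subseteq> restrict_comp_reps k d W ` nonedge_const (cocycle_join_E d k) W"
  proof
    fix h :: "nat \<times> nat \<Rightarrow> 'k" assume h: "h \<in> supported_on (comp_reps k d W)"
    define g where "g x = (if x \<in> W then h (comp_rep k W x) else 0)" for x
    have "g \<in> nonedge_const (cocycle_join_E d k) W"
      using comp_rep_pred by (auto simp: nonedge_const_cocycle_join_iff g_def)
    moreover have "restrict_comp_reps k d W g = h"
      using comp_rep_idem comp_reps_subset supported_onD[OF h]
      by (auto simp: restrict_comp_reps_def g_def fun_eq_iff)
    ultimately show "h \<in> restrict_comp_reps k d W ` nonedge_const (cocycle_join_E d k) W" by blast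
  qed
qed

lemma dim_nonedge_const_cocycle_join:
  "kv.dim (nonedge_const (cocycle_join_E d k) W :: (_ \<Rightarrow> 'k::field) set) = card (comp_reps k d W)"
proof -
  let ?Z = "nonedge_const (cocycle_join_E d k) W :: (_ \<Rightarrow> 'k) set"
  have "Vector_Spaces.linear kscale kscale (restrict_comp_reps k d W :: _ \<Rightarrow> _ \<Rightarrow> 'k)"
    unfolding Vector_Spaces.linear_iff
    by (auto simp: vector_space_kscale restrict_comp_reps_def fun_eq_iff)
  moreover have "?Z \<subseteq> kv.span (delta ` W)"
    using nonedge_const_subset_supported_on span_delta[OF finite_W] by blast
  moreover have "kv.span ?Z = ?Z"
    by (rule kv.span_eq_iff[THEN iffD2]) (rule subspace_nonedge_const)
  then have "inj_on (restrict_comp_reps k d W) (kv.span ?Z)"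
    using inj_on_restrict_comp_reps by (simp only:)
  ultimately have "kv.dim (restrict_comp_reps k d W ` ?Z) = kv.dim ?Z"
    using kvp.dim_image_eq_if_inj_on_span finite_W by blast
  then show ?thesis
    using restrict_comp_reps_image[where 'k='k]
      dim_supported_on[OF finite_subset[OF comp_reps_subset finite_W], where 'k='k] by simp
qed

lemma card_comp_reps: "card (comp_reps k d W) + card (pred_in k W) = card W + card (full_copies k d W)"
proof -
  have PW: "pred_in k W \<subseteq> W" by (auto simp: pred_in_def)
  have finP: "finite (pred_in k W)" using finite_subset[OF PW finite_W] .
  have finF: "finite (full_copies k d W)" by (auto simp: full_copies_def)
  have disj: "(W - pred_in k W) \<inter> (\<lambda>j. (j, 0)) ` full_copies k d W = {}"
  proof -
    have "(j, 0) \<in> pred_in k W" if "j \<in> full_copies k d W" for j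
      using that cyc_pred_lt[of k 0] k2 by (auto simp: full_copies_def full_copy_def pred_in_def)
    then show ?thesis by auto
  qed
  have "card (comp_reps k d W) = card (W - pred_in k W) + card ((\<lambda>j. (j, 0::nat)) ` full_copies k d W)"
    unfolding comp_reps_def using disj finite_W finF by (simp add: card_Un_disjoint)
  also have "card ((\<lambda>j. (j, 0::nat)) ` full_copies k d W) = card (full_copies k d W)"
    by (rule card_image) (auto simp: inj_on_def)
  also have "card (W - pred_in k W) = card W - card (pred_in k W)" using PW finP by (simp add: card_Diff_subset)
  finally show ?thesis using card_mono[OF finite_W PW] by simp
qed

end

context
  fixes k d :: nat and W :: "(nat \<times> nat) set"
  assumes k2: "2 \<le> k" and WV: "W \<subseteq> {..<d} \<times> {..<k}"
begin

lemma indep_pair_cocycle_join_iff: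
  assumes "x \<in> W" "y \<in> W" "x \<noteq> y"
  shows "indep_set (cocycle_join_E d k) {x, y} \<longleftrightarrow> fst x = fst y \<and> cycle_adj k (snd x) (snd y)"
proof -
  have "{x, y} \<subseteq> cocycle_join_V d k" using assms WV by (auto simp: cocycle_join_V_eq)
  then show ?thesis
    using indep_set_cocycle_join_iff[of "{x, y}"] assms(3) cycle_adj_commute by auto
qed

lemma pred_pair_in_indep_subsets:
  assumes "x \<in> pred_in k W"
  shows "{x, (fst x, cyc_pred k (snd x))} \<in> indep_subsets (cocycle_join_E d k) W 2"
proof -
  have x: "x \<in> W" "(fst x, cyc_pred k (snd x)) \<in> W" "snd x < k"
    using assms WV by (auto simp: pred_in_def)
  then have adj: "cycle_adj k (snd x) (cyc_pred k (snd x))"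
    using cycle_adj_pred_iff[OF k2] cyc_pred_lt[of k] k2 by simp
  then have "snd x \<noteq> cyc_pred k (snd x)" by (simp add: cycle_adj_def)
  then have "x \<noteq> (fst x, cyc_pred k (snd x))" by (metis snd_conv)
  then show ?thesis
    using indep_pair_cocycle_join_iff[OF x(1,2)] x adj by (auto simp: indep_subsets_def)
qed

lemma indep_subsets_2_eq_pred_pairs:
  "indep_subsets (cocycle_join_E d k) W 2 = (\<lambda>x. {x, (fst x, cyc_pred k (snd x))}) ` pred_in k W"
proof (intro subset_antisym subsetI)
  fix S assume S: "S \<in> indep_subsets (cocycle_join_E d k) W 2"
  then obtain x y where xy: "S = {x, y}" "x \<noteq> y" "x \<in> W" "y \<in> W"
    by (auto simp: indep_subsets_def card_2_iff)
  then have "fst x = fst y" "cycle_adj k (snd x) (snd y)"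
    using S indep_pair_cocycle_join_iff by (auto simp: indep_subsets_def)
  moreover have "snd x < k" "snd y < k" using xy WV by auto
  ultimately have "y = (fst x, cyc_pred k (snd x)) \<or> x = (fst y, cyc_pred k (snd y))"
    using cycle_adj_pred_iff[OF k2] by (metis prod.collapse)
  then show "S \<in> (\<lambda>x. {x, (fst x, cyc_pred k (snd x))}) ` pred_in k W"
    using xy by (auto simp: pred_in_def insert_commute)
qed (use pred_pair_in_indep_subsets in blast)

lemma card_indep_pairs_cocycle_join:
  assumes "3 \<le> k"
  shows "card (indep_subsets (cocycle_join_E d k) W 2) = card (pred_in k W)"
proof -
  have "inj_on (\<lambda>x. {x, (fst x, cyc_pred k (snd x))}) (pred_in k W)"
  proof (rule inj_onI)
    fix x y assume xy: "x \<in> pred_in k W" "y \<in> pred_in k W"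
      and eq: "{x, (fst x, cyc_pred k (snd x))} = {y, (fst y, cyc_pred k (snd y))}"
    show "x = y"
    proof (rule ccontr)
      assume "x \<noteq> y"
      then have "x = (fst y, cyc_pred k (snd y))" "y = (fst x, cyc_pred k (snd x))"
        using eq by (auto simp: doubleton_eq_iff)
      moreover have "snd x < k" using xy WV by (auto simp: pred_in_def)
      ultimately show False using cyc_pred_pred_neq[OF assms] by (metis snd_conv)
    qed
  qed
  then show ?thesis by (simp add: indep_subsets_2_eq_pred_pairs card_image)
qed

lemma mem_W_bounds: "x \<in> W \<Longrightarrow> fst x < d \<and> snd x < k"
  using WV by (auto simp: mem_Times_iff)

lemma indep_triple_cocycle_join:
  assumes "S \<in> indep_subsets (cocycle_join_E d k) W 3"
  shows "k = 3 \<and> (\<exists>j<d. S = {j} \<times> {..<3})"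
proof -
  have S: "S \<subseteq> W" "card S = 3" "indep_set (cocycle_join_E d k) S"
    using assms by (simp_all add: indep_subsets_def)
  then obtain x y z where xyz: "S = {x, y, z}" "x \<noteq> y" "x \<noteq> z" "y \<noteq> z"
    by (auto simp: card_3_iff)
  have "S \<subseteq> cocycle_join_V d k" using S(1) WV by (simp add: cocycle_join_V_eq)
  then have adj: "\<forall>a\<in>S. \<forall>b\<in>S. a \<noteq> b \<longrightarrow> fst a = fst b \<and> cycle_adj k (snd a) (snd b)"
    using indep_set_cocycle_join_iff S(3) by blast
  have xy: "fst x = fst y \<and> cycle_adj k (snd x) (snd y)" using adj xyz by blast
  have xz: "fst x = fst z \<and> cycle_adj k (snd x) (snd z)" using adj xyz by blast
  have yz: "fst y = fst z \<and> cycle_adj k (snd y) (snd z)" using adj xyz by blast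
  have snd_distinct: "snd x \<noteq> snd y" "snd x \<noteq> snd z" "snd y \<noteq> snd z"
    using xy xz yz by (simp_all add: cycle_adj_def)
  have k3: "k = 3"
    using cycle_adj_triangle[OF xy[THEN conjunct2] xz[THEN conjunct2] yz[THEN conjunct2] snd_distinct] .
  have bounds: "fst x < d" "snd x < 3" "snd y < 3" "snd z < 3"
    using mem_W_bounds[of x] mem_W_bounds[of y] mem_W_bounds[of z] S(1) xyz(1) k3 by auto
  then have "{snd x, snd y, snd z} = {..<3}"
    using snd_distinct by (auto simp: lessThan_nat_numeral less_Suc_eq)
  moreover have "S = {fst x} \<times> {snd x, snd y, snd z}"
    using xy xz xyz(1) by (auto simp: prod_eq_iff)
  ultimately show ?thesis using k3 bounds(1) by blast
qed

lemma fiber_in_indep_subsets: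
  assumes "k = 3" "j \<in> full_copies k d W"
  shows "{j} \<times> {..<3} \<in> indep_subsets (cocycle_join_E d k) W 3"
proof -
  have "{j} \<times> {..<3} \<subseteq> W" using assms by (auto simp: full_copies_def full_copy_def)
  moreover have "{j} \<times> {..<3} \<subseteq> cocycle_join_V d k" using calculation WV by (simp add: cocycle_join_V_eq)
  ultimately show ?thesis
    using assms(1) indep_set_cocycle_join_iff cycle_adj_3
    by (auto simp: indep_subsets_def card_cartesian_product)
qed

lemma inj_on_fiber: "0 < n \<Longrightarrow> inj_on (\<lambda>j. {j} \<times> {..<n::nat}) A"
proof (rule inj_onI)
  fix j j' assume "0 < n" "{j} \<times> {..<n} = {j'} \<times> {..<n}"
  then have "(j, 0) \<in> {j'} \<times> {..<n}" by blast
  then show "j = j'" by simp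
qed

lemma card_indep_triples_cocycle_join:
  "card (indep_subsets (cocycle_join_E d k) W 3) = (if k = 3 then card (full_copies k d W) else 0)"
proof (cases "k = 3")
  case True
  have "indep_subsets (cocycle_join_E d k) W 3 = (\<lambda>j. {j} \<times> {..<3::nat}) ` full_copies k d W"
  proof (intro subset_antisym subsetI)
    fix S assume S: "S \<in> indep_subsets (cocycle_join_E d k) W 3"
    then obtain j where j: "j < d" "S = {j} \<times> {..<3}" using indep_triple_cocycle_join by blast
    moreover have "S \<subseteq> W" using S by (simp add: indep_subsets_def)
    ultimately have "j \<in> full_copies k d W"
      using True by (auto simp: full_copies_def full_copy_def)
    then show "S \<in> (\<lambda>j. {j} \<times> {..<3::nat}) ` full_copies k d W" using j(2) by blast
  next
    fix S assume "S \<in> (\<lambda>j. {j} \<times> {..<3::nat}) ` full_copies k d W"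
    then show "S \<in> indep_subsets (cocycle_join_E d k) W 3"
      using fiber_in_indep_subsets[OF True] by blast
  qed
  then show ?thesis using True card_image[OF inj_on_fiber[of 3 "full_copies k d W"]] by simp
next
  case False
  then have "indep_subsets (cocycle_join_E d k) W 3 = {}"
    using indep_triple_cocycle_join by blast
  then show ?thesis using False by simp
qed

lemma indep_triples_cocycle_join_unique:
  assumes "S \<in> indep_subsets (cocycle_join_E d k) W 3" "T \<in> indep_subsets (cocycle_join_E d k) W 3"
    "2 \<le> card (S \<inter> T)"
  shows "S = T"
proof -
  obtain j j' where "S = {j} \<times> {..<3}" "T = {j'} \<times> {..<3}"
    using indep_triple_cocycle_join assms(1,2) by metis
  moreover have "S \<inter> T \<noteq> {}" using assms(3) by (metis card.empty not_numeral_le_zero)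
  ultimately show ?thesis by auto
qed

lemma card_indep_pairs_cocycle_join_2:
  assumes "k = 2"
  shows "card (indep_subsets (cocycle_join_E d k) W 2) = card (full_copies k d W)"
proof -
  have fiber: "{j} \<times> {..<2::nat} = {(j, 0), (j, 1)}" for j :: nat
    by (auto simp: less_2_cases_iff)
  have "indep_subsets (cocycle_join_E d k) W 2 = (\<lambda>j. {j} \<times> {..<2::nat}) ` full_copies k d W"
  proof (intro subset_antisym subsetI)
    fix S assume S: "S \<in> indep_subsets (cocycle_join_E d k) W 2"
    then obtain x y where xy: "S = {x, y}" "x \<noteq> y" "x \<in> W" "y \<in> W"
      by (auto simp: indep_subsets_def card_2_iff)
    then have "indep_set (cocycle_join_E d k) {x, y}" using S by (simp add: indep_subsets_def)
    then have "fst x = fst y \<and> cycle_adj k (snd x) (snd y)"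
      using indep_pair_cocycle_join_iff[OF xy(3,4,2)] by simp
    moreover have "fst x < d" "snd x < 2" "snd y < 2"
      using mem_W_bounds[OF xy(3)] mem_W_bounds[OF xy(4)] assms by auto
    ultimately have "{snd x, snd y} = {..<2}"
      by (auto simp: cycle_adj_def lessThan_nat_numeral less_Suc_eq)
    moreover have "y = (fst x, snd y)"
      using \<open>fst x = fst y \<and> cycle_adj k (snd x) (snd y)\<close> by simp
    then have "S = {fst x} \<times> {snd x, snd y}"
      using xy(1) by (cases x) auto
    ultimately have S_eq: "S = {fst x} \<times> {..<2}" by (simp only:)
    moreover have "S \<subseteq> W" using xy by simp
    ultimately have "{fst x} \<times> {..<2} \<subseteq> W" by (simp only:)
    then have "fst x \<in> full_copies k d W"
      using \<open>fst x < d\<close> assms by (auto simp: full_copies_def full_copy_def)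
    then show "S \<in> (\<lambda>j. {j} \<times> {..<2::nat}) ` full_copies k d W" using S_eq by blast
  next
    fix S assume "S \<in> (\<lambda>j. {j} \<times> {..<2::nat}) ` full_copies k d W"
    then obtain j where j: "j \<in> full_copies k d W" "S = {(j, 0), (j, 1)}"
      using fiber by blast
    then have "(j, 0) \<in> W" "(j, 1) \<in> W" using assms by (auto simp: full_copies_def full_copy_def)
    moreover have "cycle_adj k 0 1" using assms cycle_adj_2 by simp
    ultimately show "S \<in> indep_subsets (cocycle_join_E d k) W 2"
      using j(2) indep_pair_cocycle_join_iff[of "(j, 0)" "(j, 1)"] by (auto simp: indep_subsets_def)
  qed
  then show ?thesis using card_image[OF inj_on_fiber[of 2 "full_copies k d W"]] by simp
qed

lemma card_pred_in_2:
  assumes "k = 2"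
  shows "card (pred_in k W) = 2 * card (full_copies k d W)"
proof -
  have "cyc_pred k u = 1 - u" if "u < 2" for u
    using that assms by (auto simp: cyc_pred_def less_2_cases_iff)
  then have "pred_in k W = full_copies k d W \<times> {..<2}"
    using WV assms by (fastforce simp: pred_in_def full_copies_def full_copy_def less_2_cases_iff)
  moreover have "finite (full_copies k d W)" by (simp add: full_copies_def)
  ultimately show ?thesis by (simp add: card_cartesian_product)
qed

end

context
  fixes k d :: nat and W :: "(nat \<times> nat) set"
  assumes k2: "2 \<le> k" and WV: "W \<subseteq> {..<d} \<times> {..<k}"
begin

interpretation H: simple_graph "cocycle_join_V d k" "cocycle_join_E d k"
  by (rule simple_graph_cocycle_join[OF k2])

lemma W_subset_cocycle_join_V: "W \<subseteq> cocycle_join_V d k"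
  using WV by (simp add: cocycle_join_V_eq)

lemma koszul_hdim_cocycle_join_facets:
  assumes "card W = i + 1" "1 \<le> i"
  shows "koszul_hdim TYPE('k::field) (cocycle_join_V d k) (cocycle_join_E d k) (sqfree_deg W) i
     + 1 + card (pred_in k W) = card W + card (full_copies k d W)"
proof -
  have "W \<noteq> {}" using assms(1) by auto
  then obtain x where "x \<in> W" by blast
  then have "comp_reps k d W \<noteq> {}" using comp_rep_in_comp_reps[OF k2 WV] by blast
  then have "1 \<le> card (comp_reps k d W)"
    using finite_subset[OF comp_reps_subset[OF k2 WV] finite_W[OF k2 WV]]
    by (simp add: Suc_le_eq card_gt_0_iff)
  then show ?thesis
    using H.koszul_hdim_sqfree_facets[OF W_subset_cocycle_join_V assms, where 'k='k]
      dim_nonedge_const_cocycle_join[OF k2 WV, where 'k='k] card_comp_reps[OF k2 WV]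
    by simp
qed

lemma dim_kboundaries_cocycle_join_ridges:
  assumes "card W = i + 2"
  shows "kv.dim (kboundaries (cocycle_join_V d k) (cocycle_join_E d k) (sqfree_deg W) i :: (_ \<Rightarrow> 'k::field) set)
    + card (full_copies k d W) = card (pred_in k W)"
proof -
  have "kv.dim (kboundaries (cocycle_join_V d k) (cocycle_join_E d k) (sqfree_deg W) i :: (_ \<Rightarrow> 'k) set) =
      card W - card (comp_reps k d W)"
    using H.dim_kboundaries_sqfree_ridges[OF W_subset_cocycle_join_V assms, where 'k='k]
      dim_nonedge_const_cocycle_join[OF k2 WV, where 'k='k] by simp
  then show ?thesis
    using card_comp_reps[OF k2 WV] card_mono[OF finite_W[OF k2 WV] comp_reps_subset[OF k2 WV]]
    by simp
qed

lemma koszul_hdim_cocycle_join_ridges: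
  assumes "card W = i + 2" "1 \<le> i"
  shows "koszul_hdim TYPE('k::field) (cocycle_join_V d k) (cocycle_join_E d k) (sqfree_deg W) i =
    (if 4 \<le> k then card (full_copies k d W) else 0)"
proof -
  let ?V = "cocycle_join_V d k" and ?E = "cocycle_join_E d k"
  have "kv.dim (kcycles ?V ?E (sqfree_deg W) i :: (_ \<Rightarrow> 'k) set) =
      card (indep_subsets ?E W 2) - card (indep_subsets ?E W 3)"
    by (rule H.dim_kcycles_sqfree_ridges[OF W_subset_cocycle_join_V assms
          indep_triples_cocycle_join_unique[OF k2 WV]])
  then have hdim: "koszul_hdim TYPE('k) ?V ?E (sqfree_deg W) i =
      (card (indep_subsets ?E W 2) - card (indep_subsets ?E W 3)) -
      kv.dim (kboundaries ?V ?E (sqfree_deg W) i :: (_ \<Rightarrow> 'k) set)"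
    unfolding koszul_hdim_eq[OF assms(2)] by (simp only:)
  note boundaries = dim_kboundaries_cocycle_join_ridges[OF assms(1), where 'k='k]
  consider "k = 2" | "3 \<le> k" using k2 by linarith
  then show ?thesis
  proof cases
    case 1
    then show ?thesis
      using hdim boundaries card_indep_pairs_cocycle_join_2[OF k2 WV] card_pred_in_2[OF k2 WV]
        card_indep_triples_cocycle_join[OF k2 WV] by simp
  next
    case 2
    then show ?thesis
      using hdim boundaries card_indep_pairs_cocycle_join[OF k2 WV 2]
        card_indep_triples_cocycle_join[OF k2 WV] by (cases "k = 3") simp_all
  qed
qed

end

section \<open>Counting and the Betti numbers\<close>

lemma card_supersets:
  assumes "finite V" "A \<subseteq> V"
  shows "card {W. W \<subseteq> V \<and> card W = m \<and> A \<subseteq> W} =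
    (if card A \<le> m then (card V - card A) choose (m - card A) else 0)"
proof (cases "card A \<le> m")
  case True
  have fin: "finite A" "finite (V - A)" using assms finite_subset by auto
  have "{W. W \<subseteq> V \<and> card W = m \<and> A \<subseteq> W} = (\<lambda>S. S \<union> A) ` {S. S \<subseteq> V - A \<and> card S = m - card A}"
  proof (intro subset_antisym subsetI)
    fix W assume W: "W \<in> {W. W \<subseteq> V \<and> card W = m \<and> A \<subseteq> W}"
    then have "card (W - A) = m - card A" using fin(1) by (simp add: card_Diff_subset)
    moreover have "W = (W - A) \<union> A" using W by blast
    ultimately show "W \<in> (\<lambda>S. S \<union> A) ` {S. S \<subseteq> V - A \<and> card S = m - card A}"
      using W by blast
  next
    fix W assume "W \<in> (\<lambda>S. S \<union> A) ` {S. S \<subseteq> V - A \<and> card S = m - card A}"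
    then obtain S where S: "S \<subseteq> V - A" "card S = m - card A" "W = S \<union> A" by blast
    moreover have "S \<inter> A = {}" using S(1) by blast
    ultimately have "card W = card S + card A"
      using fin finite_subset[OF S(1) fin(2)] by (simp add: card_Un_disjoint)
    then show "W \<in> {W. W \<subseteq> V \<and> card W = m \<and> A \<subseteq> W}" using S assms(2) True by auto
  qed
  moreover have "inj_on (\<lambda>S. S \<union> A) {S. S \<subseteq> V - A \<and> card S = m - card A}"
    by (rule inj_onI) blast
  ultimately show ?thesis
    using True n_subsets[OF fin(2)] card_Diff_subset[OF fin(1) assms(2)] by (simp add: card_image)
next
  case False
  then have "{W. W \<subseteq> V \<and> card W = m \<and> A \<subseteq> W} = {}"
    using assms(1) by (auto dest: card_mono[OF finite_subset])
  with False show ?thesis by (simp only: card.empty if_False)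
qed

lemma sum_card_Collect_swap:
  assumes "finite A" "finite B"
  shows "(\<Sum>a\<in>A. card {b\<in>B. P a b}) = (\<Sum>b\<in>B. card {a\<in>A. P a b})"
proof -
  have "card {b\<in>B. P a b} = (\<Sum>b\<in>B. if P a b then 1 else 0)" for a
    using assms(2) by (simp add: sum.If_cases Int_def)
  moreover have "card {a\<in>A. P a b} = (\<Sum>a\<in>A. if P a b then 1 else 0)" for b
    using assms(1) by (simp add: sum.If_cases Int_def)
  ultimately show ?thesis by (simp add: sum.swap[of _ A])
qed

lemma sum_card_pred_in:
  assumes "2 \<le> k" "2 \<le> m"
  shows "(\<Sum>W | W \<subseteq> {..<d} \<times> {..<k} \<and> card W = m. card (pred_in k W)) =
    d * k * (d * k - 2 choose (m - 2))"
proof -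
  let ?V = "{..<d} \<times> {..<k}" and ?Ws = "{W. W \<subseteq> {..<d} \<times> {..<k} \<and> card W = m}"
  have fin: "finite ?V" "finite ?Ws" "card ?V = d * k"
    by (auto intro: finite_subset[of _ "Pow ?V"] simp: card_cartesian_product)
  have "(\<Sum>W\<in>?Ws. card (pred_in k W)) = (\<Sum>W\<in>?Ws. card {x\<in>?V. {x, (fst x, cyc_pred k (snd x))} \<subseteq> W})"
    by (intro sum.cong refl arg_cong[where f = card]) (auto simp: pred_in_def)
  also have "\<dots> = (\<Sum>x\<in>?V. card {W\<in>?Ws. {x, (fst x, cyc_pred k (snd x))} \<subseteq> W})"
    by (rule sum_card_Collect_swap[OF fin(2,1)])
  also have "\<dots> = (\<Sum>x\<in>?V. d * k - 2 choose (m - 2))"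
  proof (rule sum.cong[OF refl])
    fix x assume x: "x \<in> ?V"
    then have "snd x \<noteq> cyc_pred k (snd x)" "(fst x, cyc_pred k (snd x)) \<in> ?V"
      using cyc_pred_lt[of k] cycle_adj_pred_iff[OF assms(1), of "snd x" "cyc_pred k (snd x)"] assms(1)
      by (auto simp: cycle_adj_def)
    then have two: "card {x, (fst x, cyc_pred k (snd x))} = 2"
      and sub: "{x, (fst x, cyc_pred k (snd x))} \<subseteq> ?V"
      using x by (auto simp: prod_eq_iff)
    have "card {W\<in>?Ws. {x, (fst x, cyc_pred k (snd x))} \<subseteq> W} =
        card {W. W \<subseteq> ?V \<and> card W = m \<and> {x, (fst x, cyc_pred k (snd x))} \<subseteq> W}"
      by (rule arg_cong[where f = card]) auto
    also have "\<dots> = d * k - 2 choose (m - 2)"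
      unfolding card_supersets[OF fin(1) sub] two fin(3) using assms(2) by simp
    finally show "card {W\<in>?Ws. {x, (fst x, cyc_pred k (snd x))} \<subseteq> W} = d * k - 2 choose (m - 2)" .
  qed
  finally show ?thesis using fin(3) by simp
qed

lemma sum_card_full_copies:
  "(\<Sum>W | W \<subseteq> {..<d} \<times> {..<k} \<and> card W = m. card (full_copies k d W)) =
    (if k \<le> m then d * ((d - 1) * k choose (m - k)) else 0)"
proof -
  let ?V = "{..<d} \<times> {..<k}" and ?Ws = "{W. W \<subseteq> {..<d} \<times> {..<k} \<and> card W = m}"
  have fin: "finite ?V" "finite ?Ws" "card ?V = d * k"
    by (auto intro: finite_subset[of _ "Pow ?V"] simp: card_cartesian_product)
  have "(\<Sum>W\<in>?Ws. card (full_copies k d W)) = (\<Sum>W\<in>?Ws. card {j\<in>{..<d}. {j} \<times> {..<k} \<subseteq> W})"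
    by (intro sum.cong refl arg_cong[where f = card]) (auto simp: full_copies_def full_copy_def)
  also have "\<dots> = (\<Sum>j\<in>{..<d}. card {W\<in>?Ws. {j} \<times> {..<k} \<subseteq> W})"
    by (rule sum_card_Collect_swap[OF fin(2)]) simp
  also have "\<dots> = (\<Sum>j\<in>{..<d}. if k \<le> m then (d - 1) * k choose (m - k) else 0)"
  proof (rule sum.cong[OF refl])
    fix j assume "j \<in> {..<d}"
    then have "{j} \<times> {..<k} \<subseteq> ?V" "card ({j} \<times> {..<k}) = k" by (auto simp: card_cartesian_product)
    moreover have "d * k - k = (d - 1) * k" by (simp add: diff_mult_distrib)
    moreover have "card {W\<in>?Ws. {j} \<times> {..<k} \<subseteq> W} =
        card {W. W \<subseteq> ?V \<and> card W = m \<and> {j} \<times> {..<k} \<subseteq> W}"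
      by (rule arg_cong[where f = card]) auto
    ultimately show "card {W\<in>?Ws. {j} \<times> {..<k} \<subseteq> W} = (if k \<le> m then (d - 1) * k choose (m - k) else 0)"
      using card_supersets[OF fin(1), of "{j} \<times> {..<k}" m] fin(3) by simp
  qed
  finally show ?thesis by simp
qed

lemma betti_cocycle_join_eq_sum:
  assumes "2 \<le> k" "1 \<le> i" "j \<le> i + 2"
  shows "betti TYPE('k::field) (cocycle_join_V d k) (cocycle_join_E d k) i j =
    (\<Sum>W | W \<subseteq> {..<d} \<times> {..<k} \<and> card W = j.
      koszul_hdim TYPE('k) (cocycle_join_V d k) (cocycle_join_E d k) (sqfree_deg W) i)"
proof -
  interpret H: simple_graph "cocycle_join_V d k" "cocycle_join_E d k"
    by (rule simple_graph_cocycle_join[OF assms(1)])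
  show ?thesis
    using H.betti_eq_sum_sqfree[OF assms(2,3)] by (simp add: cocycle_join_V_eq)
qed

lemma betti_cocycle_join_linear:
  assumes "2 \<le> k" "1 \<le> i"
  shows "betti TYPE('k::field) (cocycle_join_V d k) (cocycle_join_E d k) i (i + 1)
      + d * k * (d * k - 2 choose (i - 1)) =
    i * (d * k choose (i + 1)) + (if k \<le> i + 1 then d * ((d - 1) * k choose (i + 1 - k)) else 0)"
proof -
  let ?Ws = "{W. W \<subseteq> {..<d} \<times> {..<k} \<and> card W = i + 1}"
  let ?h = "\<lambda>W. koszul_hdim TYPE('k) (cocycle_join_V d k) (cocycle_join_E d k) (sqfree_deg W) i"
  have "betti TYPE('k) (cocycle_join_V d k) (cocycle_join_E d k) i (i + 1)
      + (\<Sum>W\<in>?Ws. card (pred_in k W)) = (\<Sum>W\<in>?Ws. ?h W + card (pred_in k W))"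
    using betti_cocycle_join_eq_sum[OF assms, of "i + 1" d, where 'k='k] by (simp add: sum.distrib)
  also have "\<dots> = (\<Sum>W\<in>?Ws. i + card (full_copies k d W))"
    using koszul_hdim_cocycle_join_facets[OF assms(1) _ _ assms(2), where 'k='k] by (intro sum.cong) auto
  also have "\<dots> = i * card ?Ws + (\<Sum>W\<in>?Ws. card (full_copies k d W))"
    by (simp add: sum.distrib)
  finally show ?thesis
    using sum_card_pred_in[OF assms(1), of "i + 1" d] sum_card_full_copies[where d = d and k = k and m = "i + 1"] assms(2)
      n_subsets[of "{..<d} \<times> {..<k}" "i + 1"] by (simp add: card_cartesian_product)
qed

lemma betti_cocycle_join_ridges:
  assumes "2 \<le> k" "1 \<le> i"
  shows "betti TYPE('k::field) (cocycle_join_V d k) (cocycle_join_E d k) i (i + 2) =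
    (if 4 \<le> k then (if k \<le> i + 2 then d * ((d - 1) * k choose (i + 2 - k)) else 0) else 0)"
proof -
  have "betti TYPE('k) (cocycle_join_V d k) (cocycle_join_E d k) i (i + 2) =
      (\<Sum>W | W \<subseteq> {..<d} \<times> {..<k} \<and> card W = i + 2. if 4 \<le> k then card (full_copies k d W) else 0)"
    using betti_cocycle_join_eq_sum[OF assms, of "i + 2" d, where 'k='k]
      koszul_hdim_cocycle_join_ridges[OF assms(1) _ _ assms(2), where 'k='k] by simp
  then show ?thesis using sum_card_full_copies[where d = d and k = k and m = "i + 2"] by simp
qed

lemma binomial_shift_two:
  assumes "2 \<le> N" "1 \<le> i"
  shows "N * (N - 1) * (N - 2 choose (i - 1)) = (N choose (i + 1)) * (i + 1) * i"
proof -
  obtain n where n: "N = Suc (Suc n)" using assms(1) by (metis add_2_eq_Suc le_Suc_ex)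
  obtain i' where i': "i = Suc i'" using assms(2) by (cases i) auto
  have "N * (N - 1) * (N - 2 choose (i - 1)) = Suc (Suc n) * (Suc n * (n choose i'))"
    using n i' by (simp only: diff_Suc_Suc diff_Suc_1 diff_zero mult.assoc numeral_2_eq_2)
  also have "Suc n * (n choose i') = (Suc n choose i) * i"
    using Suc_times_binomial_eq[of n i'] i' by simp
  also have "Suc (Suc n) * ((Suc n choose i) * i) = (Suc (Suc n) * (Suc n choose i)) * i"
    by (simp only: mult.assoc)
  also have "Suc (Suc n) * (Suc n choose i) = (N choose (i + 1)) * (i + 1)"
    using Suc_times_binomial_eq[of "Suc n" i] n by simp
  finally show ?thesis .
qed

lemma binomial_shift_two_real:
  assumes "2 \<le> N" "1 \<le> i"
  shows "real i * real (N choose (i + 1)) - real N * real (N - 2 choose (i - 1)) =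
    real (N choose (i + 1)) * real i * (real N - real i - 2) / (real N - 1)"
proof -
  let ?C = "real (N choose (i + 1))" and ?B = "real (N - 2 choose (i - 1))"
  have key: "real N * (real N - 1) * ?B = ?C * (real i + 1) * real i"
    using arg_cong[OF binomial_shift_two[OF assms], of real] assms(1)
    by (simp add: of_nat_diff algebra_simps)
  have "(real i * ?C - real N * ?B) * (real N - 1) = real i * ?C * (real N - 1) - real N * (real N - 1) * ?B"
    by (simp add: algebra_simps)
  also have "\<dots> = ?C * real i * (real N - real i - 2)"
    unfolding key by (simp add: algebra_simps)
  finally show ?thesis
    using assms(1) by (simp add: eq_divide_eq)
qed

theorem theorem3p6:
  fixes k d i :: nat
  assumes "k \<ge> 2" and "d \<ge> 2" and "i \<ge> 1"
  defines "V \<equiv> join_copies_V d {..<k}"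
      and "E \<equiv> join_copies_E d {..<k} (cocycle_edge k)"
  shows "(real (betti TYPE('k::field) V E i (i + 1)) =
           real (d * k choose (i + 1)) * real i * (real (d * k) - real i - 2) / (real (d * k) - 1)
           + (if k \<le> i + 1 then real d * real ((d - 1) * k choose (i + 1 - k)) else 0))
         \<and> betti TYPE('k::field) V E i (i + 2) =
           (if 4 \<le> k then (if k \<le> i + 2 then d * ((d - 1) * k choose (i + 2 - k)) else 0)
            else 0)"
proof
  have "2 \<le> d * k" using assms(1,2) mult_le_mono[of 1 d 2 k] by simp
  then show "real (betti TYPE('k) V E i (i + 1)) =
           real (d * k choose (i + 1)) * real i * (real (d * k) - real i - 2) / (real (d * k) - 1)
           + (if k \<le> i + 1 then real d * real ((d - 1) * k choose (i + 1 - k)) else 0)"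
    using arg_cong[OF betti_cocycle_join_linear[OF assms(1,3), of d, where 'k='k], of real]
      binomial_shift_two_real[of "d * k" i] assms(3)
    unfolding V_def E_def by (simp add: algebra_simps split: if_splits)
  show "betti TYPE('k) V E i (i + 2) =
      (if 4 \<le> k then (if k \<le> i + 2 then d * ((d - 1) * k choose (i + 2 - k)) else 0) else 0)"
    unfolding V_def E_def by (rule betti_cocycle_join_ridges[OF assms(1,3)])
qed

end
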